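(* Let $\mathcal{D}[t]\subset\mathcal{H}\subset\mathcal{D}^\times[t^\times]$ be a rigged Hilbert space with $\mathcal{D}[t]$ complete and reflexive and $\mathcal{D}^\times[t^\times]$ quasi-complete. Let $\{\xi_n\}$ be a topological basis of $\mathcal{D}[t]$. The following statements are equivalent. (i) $\{\xi_n\}$ is a Riesz-like basis. (ii) There exists a unique sequence $\{\zeta_n\}\subset\mathcal{D}^\times$ such that (a) $\{\xi_n\}$ and $\{\zeta_n\}$ are biorthogonal, i.e. $\langle\zeta_n,\xi_k\rangle=\delta_{n,k}$; (b) $\sum_{n=1}^\infty|\langle\zeta_n,f\rangle|^2<\infty$ for every $f\in\mathcal{D}$; (c) the seminorm $p_\zeta(f)=\big(\sum_{n=1}^\infty|\langle\zeta_n,f\rangle|^2\big)^{1/2}$ is continuous on $\mathcal{D}[t]$. (iii) There exists $S\in\mathcal{L}(\mathcal{D},\mathcal{D}^\times)$ with $S\geq 0$ (i.e. $\langle Sf,f\rangle\geq0$ for all $f\in\mathcal{D}$) such that $\{\xi_n\}$ and $\{S\xi_n\}$ are biorthogonal, i.e. $\langle S\xi_n,\xi_k\rangle=\delta_{n,k}$ for all $n,k$.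
   Context: A rigged Hilbert space $\mathcal{D}[t]\subset\mathcal{H}\subset\mathcal{D}^\times[t^\times]$: $\mathcal{D}$ is a dense subspace of the Hilbert space $\mathcal{H}$ with a locally convex topology $t$ finer than the norm topology, $\mathcal{D}^\times$ is the space of continuous conjugate-linear functionals on $\mathcal{D}[t]$ with the strong dual topology $t^\times=\beta(\mathcal{D}^\times,\mathcal{D})$, $\mathcal{H}\subset\mathcal{D}^\times$, and the duality form $\langle\Phi,f\rangle$ (value of $\Phi\in\mathcal{D}^\times$ at $f\in\mathcal{D}$) extends the inner product. A locally convex space is quasi-complete if every closed bounded subset is complete. A topological basis of $\mathcal{D}[t]$ is a sequence $\{\xi_n\}$ such that every $f\in\mathcal{D}$ has a unique expansion $f=\sum c_n\xi_n$ converging in $\mathcal{D}[t]$; a Schauder basis is a topological basis whose coefficient functionals are $t$-continuous. $\mathcal{L}(\mathcal{D},\mathcal{D}^\times)$ denotes the continuous linear maps $\mathcal{D}[t]\to\mathcal{D}^\times[t^\times]$, and $\mathcal{C}(\mathcal{D},\mathcal{H})$ the set of those mapping $\mathcal{D}$ into $\mathcal{H}$ continuously from $\mathcal{D}[t]$ into $\mathcal{H}$. A Schauder basis $\{\xi_n\}$ of $\mathcal{D}[t]$ is a Riesz-like basis if there exists a one-to-one $T\in\mathcal{C}(\mathcal{D},\mathcal{H})$ such that $\{T\xi_n\}$ is an orthonormal basis of $\mathcal{H}$. *)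

theory Defs
  imports "HOL-Analysis.Analysis" "HOL-Library.Function_Algebras"
begin

definition cvsubspace :: "(complex \<Rightarrow> 'a \<Rightarrow> 'a) \<Rightarrow> 'a::ab_group_add set \<Rightarrow> bool" where
  "cvsubspace sc V \<longleftrightarrow> 0 \<in> V \<and> (\<forall>x\<in>V. \<forall>y\<in>V. x + y \<in> V) \<and> (\<forall>c. \<forall>x\<in>V. sc c x \<in> V)"

definition is_seminorm :: "(complex \<Rightarrow> 'a \<Rightarrow> 'a) \<Rightarrow> 'a::ab_group_add set \<Rightarrow> ('a \<Rightarrow> real) \<Rightarrow> bool" where
  "is_seminorm sc V p \<longleftrightarrow> (\<forall>x\<in>V. p x \<ge> 0) \<and> (\<forall>c. \<forall>x\<in>V. p (sc c x) = cmod c * p x)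
     \<and> (\<forall>x\<in>V. \<forall>y\<in>V. p (x + y) \<le> p x + p y)"

definition sn_topology :: "'a::ab_group_add set \<Rightarrow> ('a \<Rightarrow> real) set \<Rightarrow> 'a topology" where
  "sn_topology V P = topology_generated_by
     {{y \<in> V. \<forall>p\<in>F. p (y - x) < e} | x F e. x \<in> V \<and> finite F \<and> F \<subseteq> P \<and> e > 0}"

definition sn_bounded :: "('a \<Rightarrow> real) set \<Rightarrow> 'a set \<Rightarrow> bool" where
  "sn_bounded P B \<longleftrightarrow> (\<forall>p\<in>P. bdd_above (p ` B))"

definition sn_cauchy :: "('a::ab_group_add \<Rightarrow> real) set \<Rightarrow> 'a filter \<Rightarrow> bool" where
  "sn_cauchy P F \<longleftrightarrow> (\<forall>p\<in>P. \<forall>e>0. eventually (\<lambda>(x, y). p (x - y) < e) (F \<times>\<^sub>F F))"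

definition sn_converges :: "('a::ab_group_add \<Rightarrow> real) set \<Rightarrow> 'a filter \<Rightarrow> 'a \<Rightarrow> bool" where
  "sn_converges P F a \<longleftrightarrow> (\<forall>p\<in>P. \<forall>e>0. eventually (\<lambda>x. p (x - a) < e) F)"

definition sn_complete_set :: "('a::ab_group_add \<Rightarrow> real) set \<Rightarrow> 'a set \<Rightarrow> bool" where
  "sn_complete_set P A \<longleftrightarrow>
     (\<forall>F. F \<noteq> bot \<and> F \<le> principal A \<and> sn_cauchy P F \<longrightarrow> (\<exists>a\<in>A. sn_converges P F a))"

definition sn_quasi_complete :: "'a::ab_group_add set \<Rightarrow> ('a \<Rightarrow> real) set \<Rightarrow> bool" where
  "sn_quasi_complete V P \<longleftrightarrow>
     (\<forall>A. A \<subseteq> V \<and> closedin (sn_topology V P) A \<and> sn_bounded P A \<longrightarrow> sn_complete_set P A)"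

text \<open>Continuous conjugate-linear functionals (the space V^x) and continuous linear
  functionals, represented extensionally (value 0 outside V).\<close>
definition conj_dual :: "(complex \<Rightarrow> 'a \<Rightarrow> 'a) \<Rightarrow> 'a::ab_group_add set \<Rightarrow> ('a \<Rightarrow> real) set
    \<Rightarrow> ('a \<Rightarrow> complex) set" where
  "conj_dual sc V P = {\<Phi>. (\<forall>x\<in>V. \<forall>y\<in>V. \<Phi> (x + y) = \<Phi> x + \<Phi> y)
      \<and> (\<forall>c. \<forall>x\<in>V. \<Phi> (sc c x) = cnj c * \<Phi> x) \<and> (\<forall>x. x \<notin> V \<longrightarrow> \<Phi> x = 0)
      \<and> continuous_map (sn_topology V P) euclidean \<Phi>}"

definition lin_dual :: "(complex \<Rightarrow> 'a \<Rightarrow> 'a) \<Rightarrow> 'a::ab_group_add set \<Rightarrow> ('a \<Rightarrow> real) set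
    \<Rightarrow> ('a \<Rightarrow> complex) set" where
  "lin_dual sc V P = {\<Phi>. (\<forall>x\<in>V. \<forall>y\<in>V. \<Phi> (x + y) = \<Phi> x + \<Phi> y)
      \<and> (\<forall>c. \<forall>x\<in>V. \<Phi> (sc c x) = c * \<Phi> x) \<and> (\<forall>x. x \<notin> V \<longrightarrow> \<Phi> x = 0)
      \<and> continuous_map (sn_topology V P) euclidean \<Phi>}"

text \<open>Seminorms of the strong dual topology: uniform convergence on bounded subsets of V.\<close>
definition strong_seminorms :: "'a set \<Rightarrow> ('a \<Rightarrow> real) set \<Rightarrow> (('a \<Rightarrow> complex) \<Rightarrow> real) set" where
  "strong_seminorms V P = {(\<lambda>\<Phi>. Sup ((\<lambda>v. cmod (\<Phi> v)) ` B)) | B. B \<noteq> {} \<and> B \<subseteq> V \<and> sn_bounded P B}"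

definition fsc :: "complex \<Rightarrow> ('a \<Rightarrow> complex) \<Rightarrow> 'a \<Rightarrow> complex" where
  "fsc c \<Phi> = (\<lambda>x. c * \<Phi> x)"

text \<open>Reflexivity: the canonical map into the strong bidual (the dual of the strong
  dual, with its strong topology) is a bijective topological isomorphism.\<close>
definition sn_reflexive :: "(complex \<Rightarrow> 'a \<Rightarrow> 'a) \<Rightarrow> 'a::ab_group_add set \<Rightarrow> ('a \<Rightarrow> real) set \<Rightarrow> bool" where
  "sn_reflexive sc V P \<longleftrightarrow>
     (let Vx = conj_dual sc V P; Q = strong_seminorms V P;
          Vxx = lin_dual fsc Vx Q; R = strong_seminorms Vx Q;
          J = (\<lambda>f \<Phi>. if \<Phi> \<in> Vx then \<Phi> f else 0)
      in bij_betw J V Vxx \<and> homeomorphic_map (sn_topology V P) (sn_topology Vxx R) J)"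

definition hnorm :: "('h \<Rightarrow> 'h \<Rightarrow> complex) \<Rightarrow> 'h \<Rightarrow> real" where
  "hnorm ip x = sqrt (Re (ip x x))"

definition htop :: "('h::ab_group_add \<Rightarrow> 'h \<Rightarrow> complex) \<Rightarrow> 'h topology" where
  "htop ip = sn_topology UNIV {hnorm ip}"

text \<open>The type 'h with scalar multiplication sc and inner product ip (linear in the
  first, conjugate-linear in the second argument) is a complex Hilbert space.\<close>
definition complex_hilbert :: "(complex \<Rightarrow> 'h \<Rightarrow> 'h) \<Rightarrow> ('h::ab_group_add \<Rightarrow> 'h \<Rightarrow> complex) \<Rightarrow> bool" where
  "complex_hilbert sc ip \<longleftrightarrow>
     (\<forall>x. sc 1 x = x) \<and> (\<forall>a b x. sc a (sc b x) = sc (a * b) x)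
   \<and> (\<forall>a b x. sc (a + b) x = sc a x + sc b x) \<and> (\<forall>a x y. sc a (x + y) = sc a x + sc a y)
   \<and> (\<forall>x y z. ip (x + y) z = ip x z + ip y z) \<and> (\<forall>a x y. ip (sc a x) y = a * ip x y)
   \<and> (\<forall>x y. ip y x = cnj (ip x y)) \<and> (\<forall>x. Im (ip x x) = 0 \<and> Re (ip x x) \<ge> 0)
   \<and> (\<forall>x. ip x x = 0 \<longrightarrow> x = 0)
   \<and> sn_complete_set {hnorm ip} UNIV"

definition orthonormal_basis :: "(complex \<Rightarrow> 'h \<Rightarrow> 'h) \<Rightarrow> ('h::ab_group_add \<Rightarrow> 'h \<Rightarrow> complex)
    \<Rightarrow> (nat \<Rightarrow> 'h) \<Rightarrow> bool" where
  "orthonormal_basis sc ip e \<longleftrightarrow>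
     (\<forall>n m. ip (e n) (e m) = (if n = m then 1 else 0))
   \<and> (htop ip) closure_of {(\<Sum>i\<in>F. sc (c i) (e i)) | F c. finite F} = UNIV"

text \<open>D[t] \<subset> H \<subset> D^x[t^x]: D a dense subspace of H carrying the locally convex
  topology t given by the seminorms P, finer than the norm topology. The space D^x is
  conj_dual sc D P with the strong topology of strong_seminorms D P; H embeds in
  D^x via f \<mapsto> ip f restricted to D.\<close>
definition rigged_hilbert :: "(complex \<Rightarrow> 'h \<Rightarrow> 'h) \<Rightarrow> ('h::ab_group_add \<Rightarrow> 'h \<Rightarrow> complex)
    \<Rightarrow> 'h set \<Rightarrow> ('h \<Rightarrow> real) set \<Rightarrow> bool" where
  "rigged_hilbert sc ip D P \<longleftrightarrow>
     complex_hilbert sc ip \<and> cvsubspace sc D \<and> (\<forall>p\<in>P. is_seminorm sc D p)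
   \<and> (htop ip) closure_of D = UNIV
   \<and> (\<forall>U. openin (htop ip) U \<longrightarrow> openin (sn_topology D P) (U \<inter> D))"

definition topological_basis_sn :: "(complex \<Rightarrow> 'h \<Rightarrow> 'h) \<Rightarrow> 'h::ab_group_add set
    \<Rightarrow> ('h \<Rightarrow> real) set \<Rightarrow> (nat \<Rightarrow> 'h) \<Rightarrow> bool" where
  "topological_basis_sn sc D P \<xi> \<longleftrightarrow> (\<forall>n. \<xi> n \<in> D) \<and>
     (\<forall>f\<in>D. \<exists>!c. limitin (sn_topology D P) (\<lambda>N. \<Sum>n<N. sc (c n) (\<xi> n)) f sequentially)"

definition basis_coeff :: "(complex \<Rightarrow> 'h \<Rightarrow> 'h) \<Rightarrow> 'h::ab_group_add set
    \<Rightarrow> ('h \<Rightarrow> real) set \<Rightarrow> (nat \<Rightarrow> 'h) \<Rightarrow> nat \<Rightarrow> 'h \<Rightarrow> complex" where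
  "basis_coeff sc D P \<xi> n f =
     (THE c. limitin (sn_topology D P) (\<lambda>N. \<Sum>k<N. sc (c k) (\<xi> k)) f sequentially) n"

definition schauder_basis_sn :: "(complex \<Rightarrow> 'h \<Rightarrow> 'h) \<Rightarrow> 'h::ab_group_add set
    \<Rightarrow> ('h \<Rightarrow> real) set \<Rightarrow> (nat \<Rightarrow> 'h) \<Rightarrow> bool" where
  "schauder_basis_sn sc D P \<xi> \<longleftrightarrow> topological_basis_sn sc D P \<xi> \<and>
     (\<forall>n. continuous_map (sn_topology D P) euclidean (basis_coeff sc D P \<xi> n))"

definition in_C_DH :: "(complex \<Rightarrow> 'h \<Rightarrow> 'h) \<Rightarrow> ('h::ab_group_add \<Rightarrow> 'h \<Rightarrow> complex)
    \<Rightarrow> 'h set \<Rightarrow> ('h \<Rightarrow> real) set \<Rightarrow> ('h \<Rightarrow> 'h) \<Rightarrow> bool" where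
  "in_C_DH sc ip D P T \<longleftrightarrow> (\<forall>x\<in>D. \<forall>y\<in>D. T (x + y) = T x + T y)
     \<and> (\<forall>c. \<forall>x\<in>D. T (sc c x) = sc c (T x))
     \<and> continuous_map (sn_topology D P) (htop ip) T"

definition riesz_like_basis :: "(complex \<Rightarrow> 'h \<Rightarrow> 'h) \<Rightarrow> ('h::ab_group_add \<Rightarrow> 'h \<Rightarrow> complex)
    \<Rightarrow> 'h set \<Rightarrow> ('h \<Rightarrow> real) set \<Rightarrow> (nat \<Rightarrow> 'h) \<Rightarrow> bool" where
  "riesz_like_basis sc ip D P \<xi> \<longleftrightarrow> schauder_basis_sn sc D P \<xi> \<and>
     (\<exists>T. in_C_DH sc ip D P T \<and> inj_on T D \<and> orthonormal_basis sc ip (\<lambda>n. T (\<xi> n)))"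

definition in_L_DDx :: "(complex \<Rightarrow> 'h \<Rightarrow> 'h) \<Rightarrow> 'h::ab_group_add set \<Rightarrow> ('h \<Rightarrow> real) set
    \<Rightarrow> ('h \<Rightarrow> 'h \<Rightarrow> complex) \<Rightarrow> bool" where
  "in_L_DDx sc D P S \<longleftrightarrow> (\<forall>x\<in>D. S x \<in> conj_dual sc D P)
     \<and> (\<forall>x\<in>D. \<forall>y\<in>D. S (x + y) = S x + S y) \<and> (\<forall>c. \<forall>x\<in>D. S (sc c x) = fsc c (S x))
     \<and> continuous_map (sn_topology D P) (sn_topology (conj_dual sc D P) (strong_seminorms D P)) S"

end

theory Submission
  imports Defs
begin

text \<open>
  (i) \<open>\<Rightarrow>\<close> (ii), (iii): if \<open>T\<close> maps \<open>\<xi>\<^sub>n\<close> onto an orthonormal basis, take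
  \<open>\<zeta>\<^sub>n = \<langle>T \<xi>\<^sub>n, T \<cdot>\<rangle>\<close> and \<open>S f = \<langle>T f, T \<cdot>\<rangle>\<close>; Bessel's inequality gives \<open>p\<^sub>\<zeta>(f) \<le> \<parallel>T f\<parallel>\<close>, hence
  summability and continuity. A biorthogonal \<open>\<zeta>\<^sub>n\<close> must be the conjugate of the \<open>n\<close>-th coefficient
  functional of the basis, which gives uniqueness.

  (ii) \<open>\<Rightarrow>\<close> (i): biorthogonality makes the \<open>\<xi>\<^sub>n\<close> linearly independent, so Gram--Schmidt
  produces an orthonormal sequence \<open>e\<^sub>n\<close> with the same finite spans. The series
  \<open>T f = \<Sum> \<langle>\<zeta>\<^sub>n, f\<rangle>\<^sup>* e\<^sub>n\<close> converges in \<open>\<H>\<close> with \<open>\<parallel>T f\<parallel> = p\<^sub>\<zeta>(f)\<close>, so \<open>T\<close> is continuous and injective,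
  \<open>T \<xi>\<^sub>n = e\<^sub>n\<close>, and the \<open>e\<^sub>n\<close> are total because the \<open>\<xi>\<^sub>n\<close> span a dense subspace of \<open>\<D>\<close>.

  (iii) \<open>\<Rightarrow>\<close> (ii): \<open>\<zeta>\<^sub>n = S \<xi>\<^sub>n\<close> is biorthogonal, and Bessel's inequality for the positive form
  \<open>\<langle>S \<cdot>, \<cdot>\<rangle>\<close> gives \<open>p\<^sub>\<zeta>(f)\<^sup>2 \<le> \<langle>S f, f\<rangle>\<close>. The combinations \<open>\<Sum> a\<^sub>n S \<xi>\<^sub>n\<close> with \<open>\<Sum> |a\<^sub>n|\<^sup>2 \<le> 1\<close> form a
  strongly bounded subset of \<open>\<D>\<^sup>\<times>\<close>, hence an equicontinuous one since \<open>\<D>\<close> is reflexive; as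
  \<open>p\<^sub>\<zeta>(f)\<close> is the supremum of their moduli at \<open>f\<close>, the seminorm \<open>p\<^sub>\<zeta>\<close> is continuous.
\<close>

section \<open>Complex Hilbert spaces\<close>

locale complex_hilbert_space =
  fixes sc :: "complex \<Rightarrow> 'h::ab_group_add \<Rightarrow> 'h" and ip :: "'h \<Rightarrow> 'h \<Rightarrow> complex"
  assumes hilbert: "complex_hilbert sc ip"
begin

lemma sc_one [simp]: "sc 1 x = x"
  and sc_assoc: "sc a (sc b x) = sc (a * b) x"
  and sc_add_left: "sc (a + b) x = sc a x + sc b x"
  and sc_add_right: "sc a (x + y) = sc a x + sc a y"
  and ip_add_left: "ip (x + y) z = ip x z + ip y z"
  and ip_sc_left: "ip (sc a x) y = a * ip x y"
  and ip_sym: "ip y x = cnj (ip x y)"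
  and ip_self_Im: "Im (ip x x) = 0"
  and ip_self_Re: "Re (ip x x) \<ge> 0"
  and ip_self_eq_0: "ip x x = 0 \<Longrightarrow> x = 0"
  and hnorm_complete: "sn_complete_set {hnorm ip} UNIV"
  using hilbert unfolding complex_hilbert_def by metis+

lemma sc_zero_left [simp]: "sc 0 x = 0"
  using sc_add_left[of 0 0 x] by simp

lemma sc_zero_right [simp]: "sc c 0 = 0"
  using sc_add_right[of c 0 0] by simp

lemma sc_minus_one: "sc (-1) x = - x"
  using sc_add_left[of 1 "-1" x] by (simp add: eq_neg_iff_add_eq_0 add.commute)

lemma sc_minus_right: "sc c (- x) = - sc c x"
  by (metis sc_assoc sc_minus_one mult.commute)

lemma sc_diff_right: "sc c (x - y) = sc c x - sc c y"
  using sc_add_right[of c x "-y"] sc_minus_right[of c y] by simp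

lemma sc_sum_right: "sc c (\<Sum>i\<in>A. f i) = (\<Sum>i\<in>A. sc c (f i))"
  by (induction A rule: infinite_finite_induct) (auto simp: sc_add_right)

lemma ip_add_right: "ip z (x + y) = ip z x + ip z y"
  by (metis ip_sym ip_add_left complex_cnj_add)

lemma ip_sc_right: "ip x (sc a y) = cnj a * ip x y"
  by (metis ip_sym ip_sc_left complex_cnj_mult)

lemma ip_zero_left [simp]: "ip 0 y = 0"
  by (metis ip_sc_left mult_zero_left sc_zero_left)

lemma ip_zero_right [simp]: "ip y 0 = 0"
  by (metis ip_sym ip_zero_left complex_cnj_zero)

lemma ip_minus_left: "ip (- x) y = - ip x y"
  by (metis ip_sc_left sc_minus_one mult_minus1)

lemma ip_minus_right: "ip y (- x) = - ip y x"
  by (metis ip_sym ip_minus_left complex_cnj_minus)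

lemma ip_diff_left: "ip (x - y) z = ip x z - ip y z"
  using ip_add_left[of x "-y" z] ip_minus_left[of y z] by simp

lemma ip_diff_right: "ip z (x - y) = ip z x - ip z y"
  using ip_add_right[of z x "-y"] ip_minus_right[of z y] by simp

lemma ip_sum_left: "ip (\<Sum>i\<in>A. f i) y = (\<Sum>i\<in>A. ip (f i) y)"
  by (induction A rule: infinite_finite_induct) (auto simp: ip_add_left)

lemma ip_sum_right: "ip y (\<Sum>i\<in>A. f i) = (\<Sum>i\<in>A. ip y (f i))"
  by (induction A rule: infinite_finite_induct) (auto simp: ip_add_right)

lemma hnorm_nonneg: "hnorm ip x \<ge> 0"
  using ip_self_Re unfolding hnorm_def by simp

lemma ip_self_hnorm: "ip x x = complex_of_real ((hnorm ip x)\<^sup>2)"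
  using ip_self_Im ip_self_Re unfolding hnorm_def by (simp add: complex_eq_iff)

lemma hnorm_zero [simp]: "hnorm ip 0 = 0"
  unfolding hnorm_def by simp

lemma hnorm_eq_zero: "hnorm ip x = 0 \<longleftrightarrow> x = 0"
  by (metis hnorm_zero ip_self_hnorm ip_self_eq_0 of_real_0 zero_power2)

lemma hnorm_pos: "x \<noteq> 0 \<Longrightarrow> hnorm ip x > 0"
  using hnorm_nonneg hnorm_eq_zero by (metis less_eq_real_def)

lemma hnorm_sc: "hnorm ip (sc c x) = cmod c * hnorm ip x"
proof -
  have "ip (sc c x) (sc c x) = complex_of_real ((cmod c * hnorm ip x)\<^sup>2)"
    using complex_norm_square[of c]
    by (simp add: ip_sc_left ip_sc_right ip_self_hnorm[of x] power_mult_distrib mult.commute)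
  then have "(hnorm ip (sc c x))\<^sup>2 = (cmod c * hnorm ip x)\<^sup>2"
    unfolding ip_self_hnorm of_real_eq_iff .
  then show ?thesis using hnorm_nonneg by simp
qed

lemma hnorm_minus_commute: "hnorm ip (x - y) = hnorm ip (y - x)"
  using hnorm_sc[of "-1" "x - y"] by (simp add: sc_minus_one)

lemma cmod_ip_le: "cmod (ip x y) \<le> hnorm ip x * hnorm ip y"
proof (cases "y = 0")
  case True then show ?thesis by (simp add: hnorm_nonneg)
next
  case False
  \<comment> \<open>expand \<open>0 \<le> \<langle>x - t y, x - t y\<rangle>\<close> for the optimal \<open>t = \<langle>x, y\<rangle> / \<langle>y, y\<rangle>\<close>\<close>
  define t where "t = ip x y / ip y y"
  have yy: "ip y y = complex_of_real ((hnorm ip y)\<^sup>2)" by (rule ip_self_hnorm)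
  have ny: "hnorm ip y > 0" using False by (rule hnorm_pos)
  have "0 \<le> Re (ip (x - sc t y) (x - sc t y))" by (rule ip_self_Re)
  also have "ip (x - sc t y) (x - sc t y) = ip x x - cnj t * ip x y - t * ip y x + t * cnj t * ip y y"
    by (simp add: ip_diff_left ip_diff_right ip_sc_left ip_sc_right algebra_simps)
  also have "t * cnj t * ip y y = cnj t * ip x y"
    using ny by (simp add: t_def yy field_simps)
  also have "t * ip y x = complex_of_real ((cmod (ip x y))\<^sup>2 / (hnorm ip y)\<^sup>2)"
    using complex_norm_square[of "ip x y"] by (simp add: t_def yy ip_sym[of y x])
  finally have "(cmod (ip x y))\<^sup>2 / (hnorm ip y)\<^sup>2 \<le> (hnorm ip x)\<^sup>2"
    by (simp add: ip_self_hnorm[of x])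
  then have "(cmod (ip x y))\<^sup>2 \<le> (hnorm ip x * hnorm ip y)\<^sup>2"
    using ny by (simp add: field_simps)
  then show ?thesis
    using hnorm_nonneg by (meson mult_nonneg_nonneg power2_le_imp_le)
qed

lemma hnorm_triangle: "hnorm ip (x + y) \<le> hnorm ip x + hnorm ip y"
proof -
  have "Re (ip (x + y) (x + y)) = Re (ip x x) + Re (ip y y) + 2 * Re (ip x y)"
    by (simp add: ip_add_left ip_add_right ip_sym[of y x])
  also have "Re (ip x y) \<le> hnorm ip x * hnorm ip y"
    using cmod_ip_le[of x y] complex_Re_le_cmod by (meson order_trans)
  finally have "(hnorm ip (x + y))\<^sup>2 \<le> (hnorm ip x + hnorm ip y)\<^sup>2"
    by (simp add: ip_self_hnorm power2_sum)
  then show ?thesis using hnorm_nonneg by (meson add_nonneg_nonneg power2_le_imp_le)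
qed

lemma hnorm_triangle_diff: "hnorm ip (x - z) \<le> hnorm ip (x - y) + hnorm ip (y - z)"
  using hnorm_triangle[of "x - y" "y - z"] by simp

lemma hnorm_rev_triangle: "\<bar>hnorm ip x - hnorm ip y\<bar> \<le> hnorm ip (x - y)"
  using hnorm_triangle[of "x - y" y] hnorm_triangle[of "y - x" x] hnorm_minus_commute[of x y]
  by (simp add: abs_le_iff)

definition orthonormal_seq :: "(nat \<Rightarrow> 'h) \<Rightarrow> bool" where
  "orthonormal_seq e \<longleftrightarrow> (\<forall>n m. ip (e n) (e m) = (if n = m then 1 else 0))"

lemma ip_sum_orthonormal:
  assumes "orthonormal_seq e" "finite A"
  shows "ip (\<Sum>i\<in>A. sc (c i) (e i)) (e j) = (if j \<in> A then c j else 0)"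
proof -
  have "ip (\<Sum>i\<in>A. sc (c i) (e i)) (e j) = (\<Sum>i\<in>A. if i = j then c j else 0)"
    using assms(1) unfolding orthonormal_seq_def
    by (auto simp: ip_sum_left ip_sc_left intro: sum.cong)
  then show ?thesis using assms(2) by simp
qed

lemma hnorm_sum_orthonormal:
  assumes "orthonormal_seq e" "finite A"
  shows "(hnorm ip (\<Sum>i\<in>A. sc (c i) (e i)))\<^sup>2 = (\<Sum>i\<in>A. (cmod (c i))\<^sup>2)"
proof -
  have "ip (\<Sum>i\<in>A. sc (c i) (e i)) (\<Sum>j\<in>A. sc (c j) (e j))
      = (\<Sum>j\<in>A. complex_of_real ((cmod (c j))\<^sup>2))"
    using assms complex_norm_square
    by (simp add: ip_sum_right ip_sc_right ip_sum_orthonormal mult.commute)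
  then show ?thesis
    unfolding ip_self_hnorm of_real_sum[symmetric] of_real_eq_iff .
qed

lemma Bessel_inequality:
  assumes "orthonormal_seq e" "finite A"
  shows "(\<Sum>n\<in>A. (cmod (ip (e n) x))\<^sup>2) \<le> (hnorm ip x)\<^sup>2"
proof -
  define c where "c n = ip x (e n)" for n
  define y where "y = (\<Sum>i\<in>A. sc (c i) (e i))"
  have s: "(\<Sum>j\<in>A. cnj (c j) * c j) = complex_of_real (\<Sum>j\<in>A. (cmod (c j))\<^sup>2)"
    unfolding of_real_sum by (metis complex_norm_square mult.commute)
  have "ip x y = (\<Sum>j\<in>A. cnj (c j) * c j)"
    unfolding y_def c_def by (simp add: ip_sum_right ip_sc_right)
  moreover have "ip y x = (\<Sum>j\<in>A. cnj (c j) * c j)"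
    unfolding y_def c_def by (simp add: ip_sum_left ip_sc_left ip_sym[of x] mult.commute)
  moreover have "ip y y = (\<Sum>j\<in>A. cnj (c j) * c j)"
    unfolding y_def using assms by (simp add: ip_sum_right ip_sc_right ip_sum_orthonormal)
  ultimately have "ip (x - y) (x - y) = ip x x - complex_of_real (\<Sum>j\<in>A. (cmod (c j))\<^sup>2)"
    using s by (simp add: ip_diff_left ip_diff_right)
  moreover have "0 \<le> Re (ip (x - y) (x - y))" by (rule ip_self_Re)
  moreover have "cmod (c n) = cmod (ip (e n) x)" for n
    unfolding c_def by (metis complex_mod_cnj ip_sym)
  ultimately show ?thesis by (simp add: ip_self_hnorm[of x])
qed

definition hlim :: "(nat \<Rightarrow> 'h) \<Rightarrow> 'h \<Rightarrow> bool" where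
  "hlim s a \<longleftrightarrow> (\<lambda>n. hnorm ip (s n - a)) \<longlonglongrightarrow> 0"

lemma hlim_unique: "hlim s a \<Longrightarrow> hlim s b \<Longrightarrow> a = b"
proof -
  assume "hlim s a" "hlim s b"
  then have "(\<lambda>n. hnorm ip (s n - a) + hnorm ip (s n - b)) \<longlonglongrightarrow> 0"
    unfolding hlim_def using tendsto_add_zero by blast
  moreover have "hnorm ip (a - b) \<le> hnorm ip (s n - a) + hnorm ip (s n - b)" for n
    using hnorm_triangle_diff[of a b "s n"] hnorm_minus_commute[of a "s n"] by simp
  ultimately have "hnorm ip (a - b) \<le> 0"
    by (intro LIMSEQ_le_const[where X="\<lambda>n. _ n"]) auto
  then show "a = b" using hnorm_nonneg hnorm_eq_zero by (metis antisym right_minus_eq)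
qed

lemma hlim_eventually: "eventually (\<lambda>n. s n = a) sequentially \<Longrightarrow> hlim s a"
  unfolding hlim_def by (rule tendsto_eventually) (auto elim: eventually_mono)

lemma hlim_add: "hlim s a \<Longrightarrow> hlim t b \<Longrightarrow> hlim (\<lambda>n. s n + t n) (a + b)"
  unfolding hlim_def
proof (rule Lim_null_comparison)
  show "eventually (\<lambda>n. norm (hnorm ip (s n + t n - (a + b))) \<le> hnorm ip (s n - a) + hnorm ip (t n - b))
      sequentially"
    using hnorm_triangle[of "s _ - a" "t _ - b"] by (simp add: hnorm_nonneg algebra_simps)
qed (rule tendsto_add_zero)

lemma hlim_sc: "hlim s a \<Longrightarrow> hlim (\<lambda>n. sc c (s n)) (sc c a)"
  unfolding hlim_def sc_diff_right[symmetric] hnorm_sc by (rule tendsto_mult_right_zero)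

lemma hlim_hnorm: "hlim s a \<Longrightarrow> (\<lambda>n. hnorm ip (s n)) \<longlonglongrightarrow> hnorm ip a"
  unfolding hlim_def
  by (rule Lim_transform[OF _ Lim_null_comparison[OF always_eventually]], rule tendsto_const)
    (use hnorm_rev_triangle in auto)

lemma hlim_Cauchy:
  assumes Cauchy: "\<And>e. e > 0 \<Longrightarrow> \<exists>N. \<forall>m\<ge>N. \<forall>n\<ge>N. hnorm ip (s m - s n) < e"
  shows "\<exists>a. hlim s a"
proof -
  define F where "F = filtermap s sequentially"
  have "sn_cauchy {hnorm ip} F"
    unfolding sn_cauchy_def
  proof (intro ballI allI impI)
    fix p and e :: real assume p: "p \<in> {hnorm ip}" and e: "e > 0"
    obtain N where N: "\<forall>m\<ge>N. \<forall>n\<ge>N. hnorm ip (s m - s n) < e" using Cauchy[OF e] by blast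
    have "eventually (\<lambda>x. x \<in> s ` {N..}) F"
      unfolding F_def eventually_filtermap eventually_sequentially by auto
    then show "eventually (\<lambda>(x, y). p (x - y) < e) (F \<times>\<^sub>F F)"
      unfolding eventually_prod_same using N p by auto
  qed
  moreover have "F \<noteq> bot" unfolding F_def by (simp add: filtermap_bot_iff)
  ultimately obtain a where "sn_converges {hnorm ip} F a"
    using hnorm_complete unfolding sn_complete_set_def by auto
  then have "hlim s a"
    unfolding sn_converges_def hlim_def F_def eventually_filtermap
    by (auto simp: LIMSEQ_iff hnorm_nonneg eventually_sequentially)
  then show ?thesis by blast
qed

lemma Bessel_summable:
  assumes "orthonormal_seq e"
  shows "summable (\<lambda>n. (cmod (ip (e n) x))\<^sup>2)"
    and "sqrt (\<Sum>n. (cmod (ip (e n) x))\<^sup>2) \<le> hnorm ip x"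
proof -
  have partial: "(\<Sum>n<N. (cmod (ip (e n) x))\<^sup>2) \<le> (hnorm ip x)\<^sup>2" for N
    using Bessel_inequality[OF assms] by simp
  show s: "summable (\<lambda>n. (cmod (ip (e n) x))\<^sup>2)"
    by (rule summableI_nonneg_bounded[OF _ partial]) simp
  have "sqrt (\<Sum>n. (cmod (ip (e n) x))\<^sup>2) \<le> sqrt ((hnorm ip x)\<^sup>2)"
    by (rule real_sqrt_le_mono, rule suminf_le_const[OF s partial])
  then show "sqrt (\<Sum>n. (cmod (ip (e n) x))\<^sup>2) \<le> hnorm ip x" using hnorm_nonneg by simp
qed

end

lemma l2_minkowski:
  fixes a b :: "nat \<Rightarrow> complex"
  assumes a: "summable (\<lambda>n. (cmod (a n))\<^sup>2)" and b: "summable (\<lambda>n. (cmod (b n))\<^sup>2)"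
  shows "summable (\<lambda>n. (cmod (a n + b n))\<^sup>2)"
    and "sqrt (\<Sum>n. (cmod (a n + b n))\<^sup>2) \<le> sqrt (\<Sum>n. (cmod (a n))\<^sup>2) + sqrt (\<Sum>n. (cmod (b n))\<^sup>2)"
proof -
  define M where "M = sqrt (\<Sum>n. (cmod (a n))\<^sup>2) + sqrt (\<Sum>n. (cmod (b n))\<^sup>2)"
  have L2_le: "L2_set (\<lambda>n. cmod (c n)) {..<N} \<le> sqrt (\<Sum>n. (cmod (c n))\<^sup>2)"
    if "summable (\<lambda>n. (cmod (c n))\<^sup>2)" for c :: "nat \<Rightarrow> complex" and N
    unfolding L2_set_def using that by (intro real_sqrt_le_mono sum_le_suminf) auto
  have partial: "(\<Sum>n<N. (cmod (a n + b n))\<^sup>2) \<le> M\<^sup>2" for N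
  proof -
    have "L2_set (\<lambda>n. cmod (a n + b n)) {..<N} \<le> L2_set (\<lambda>n. cmod (a n) + cmod (b n)) {..<N}"
      by (rule L2_set_mono) (auto simp: norm_triangle_ineq)
    also have "\<dots> \<le> L2_set (\<lambda>n. cmod (a n)) {..<N} + L2_set (\<lambda>n. cmod (b n)) {..<N}"
      by (rule L2_set_triangle_ineq)
    also have "\<dots> \<le> M" unfolding M_def using L2_le[OF a] L2_le[OF b] by (rule add_mono)
    finally have "(L2_set (\<lambda>n. cmod (a n + b n)) {..<N})\<^sup>2 \<le> M\<^sup>2"
      by (rule power_mono) simp
    then show ?thesis unfolding L2_set_def by (simp add: sum_nonneg)
  qed
  show s: "summable (\<lambda>n. (cmod (a n + b n))\<^sup>2)"
    by (rule summableI_nonneg_bounded[OF _ partial]) simp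
  have "sqrt (\<Sum>n. (cmod (a n + b n))\<^sup>2) \<le> sqrt (M\<^sup>2)"
    by (rule real_sqrt_le_mono, rule suminf_le_const[OF s partial])
  also have "\<dots> = M" unfolding M_def using suminf_nonneg[OF a] suminf_nonneg[OF b] by simp
  finally show "sqrt (\<Sum>n. (cmod (a n + b n))\<^sup>2) \<le> sqrt (\<Sum>n. (cmod (a n))\<^sup>2) + sqrt (\<Sum>n. (cmod (b n))\<^sup>2)"
    unfolding M_def .
qed

lemma l2_reverse_triangle:
  fixes a b :: "nat \<Rightarrow> complex"
  assumes a: "summable (\<lambda>n. (cmod (a n))\<^sup>2)" and b: "summable (\<lambda>n. (cmod (b n))\<^sup>2)"
  shows "\<bar>sqrt (\<Sum>n. (cmod (a n))\<^sup>2) - sqrt (\<Sum>n. (cmod (b n))\<^sup>2)\<bar> \<le> sqrt (\<Sum>n. (cmod (a n - b n))\<^sup>2)"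
proof -
  have "summable (\<lambda>n. (cmod (- b n))\<^sup>2)" using b by simp
  then have ab: "summable (\<lambda>n. (cmod (a n - b n))\<^sup>2)"
    using l2_minkowski(1)[OF a, of "\<lambda>n. - b n"] by simp
  have "sqrt (\<Sum>n. (cmod (a n))\<^sup>2) \<le> sqrt (\<Sum>n. (cmod (b n))\<^sup>2) + sqrt (\<Sum>n. (cmod (a n - b n))\<^sup>2)"
    using l2_minkowski(2)[OF b ab] by simp
  moreover have "sqrt (\<Sum>n. (cmod (b n))\<^sup>2) \<le> sqrt (\<Sum>n. (cmod (a n))\<^sup>2) + sqrt (\<Sum>n. (cmod (a n - b n))\<^sup>2)"
    using l2_minkowski(2)[OF a, of "\<lambda>n. b n - a n"] ab by (simp add: norm_minus_commute)
  ultimately show ?thesis by linarith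
qed

section \<open>Topologies given by seminorms\<close>

definition sn_ball :: "'a::ab_group_add set \<Rightarrow> ('a \<Rightarrow> real) set \<Rightarrow> 'a \<Rightarrow> real \<Rightarrow> 'a set" where
  "sn_ball V F x e = {y \<in> V. \<forall>p\<in>F. p (y - x) < e}"

text \<open>The only properties of the seminorms needed to see that the balls \<open>sn_ball V F x e\<close>
  form a base of \<open>sn_topology V P\<close>.\<close>
definition sn_pseudometric :: "'a::ab_group_add set \<Rightarrow> ('a \<Rightarrow> real) set \<Rightarrow> bool" where
  "sn_pseudometric V P \<longleftrightarrow>
     (\<forall>p\<in>P. p 0 = 0 \<and> (\<forall>x\<in>V. \<forall>y\<in>V. \<forall>z\<in>V. p (x - z) \<le> p (x - y) + p (y - z)))"

lemma topspace_sn_topology [simp]: "topspace (sn_topology V P) = V"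
proof
  show "topspace (sn_topology V P) \<subseteq> V"
    unfolding sn_topology_def topology_generated_by_topspace by auto
  show "V \<subseteq> topspace (sn_topology V P)"
  proof
    fix x assume "x \<in> V"
    then have "V \<in> {{y \<in> V. \<forall>p\<in>F. p (y - x) < e} | x F e. x \<in> V \<and> finite F \<and> F \<subseteq> P \<and> e > 0}"
      by (intro CollectI exI[of _ x] exI[of _ "{}"] exI[of _ "1::real"]) auto
    then show "x \<in> topspace (sn_topology V P)"
      using \<open>x \<in> V\<close> unfolding sn_topology_def topology_generated_by_topspace by blast
  qed
qed

lemma openin_sn_ball:
  "x \<in> V \<Longrightarrow> finite F \<Longrightarrow> F \<subseteq> P \<Longrightarrow> e > 0 \<Longrightarrow> openin (sn_topology V P) (sn_ball V F x e)"
  unfolding sn_topology_def sn_ball_def by (rule topology_generated_by_Basis) blast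

lemma sn_ball_subset: "sn_ball V F x e \<subseteq> V"
  unfolding sn_ball_def by auto

lemma centre_in_sn_ball:
  "sn_pseudometric V P \<Longrightarrow> x \<in> V \<Longrightarrow> F \<subseteq> P \<Longrightarrow> e > 0 \<Longrightarrow> x \<in> sn_ball V F x e"
  unfolding sn_ball_def sn_pseudometric_def by (auto dest!: subsetD)

lemma finite_less_margin:
  fixes g :: "'a \<Rightarrow> real"
  assumes "finite F" "\<forall>p\<in>F. g p < e"
  shows "\<exists>d>0. \<forall>p\<in>F. g p + d \<le> e"
proof -
  define d where "d = Min (insert 1 ((\<lambda>p. e - g p) ` F))"
  have "d > 0" unfolding d_def using assms by (subst Min_gr_iff) auto
  moreover have "d \<le> e - g p" if "p \<in> F" for p
    unfolding d_def using assms(1) that by (intro Min_le) auto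
  ultimately show ?thesis by (auto simp: le_diff_eq add.commute)
qed

lemma sn_ball_nbhd:
  assumes pm: "sn_pseudometric V P" and F: "finite F" "F \<subseteq> P"
    and x0: "x0 \<in> V" and x: "x \<in> sn_ball V F x0 e"
  shows "\<exists>d>0. sn_ball V F x d \<subseteq> sn_ball V F x0 e"
proof -
  have xV: "x \<in> V" and less: "\<forall>p\<in>F. p (x - x0) < e" using x unfolding sn_ball_def by auto
  obtain d where d: "d > 0" "\<forall>p\<in>F. p (x - x0) + d \<le> e"
    using finite_less_margin[OF F(1) less] by blast
  have "p (y - x0) < e" if "y \<in> sn_ball V F x d" "p \<in> F" for y p
  proof -
    have "y \<in> V" "p (y - x) < d" using that unfolding sn_ball_def by auto
    moreover have "p (y - x0) \<le> p (y - x) + p (x - x0)"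
      using pm F(2) \<open>y \<in> V\<close> xV x0 \<open>p \<in> F\<close> unfolding sn_pseudometric_def by blast
    moreover have "p (x - x0) + d \<le> e" using d(2) \<open>p \<in> F\<close> by blast
    ultimately show ?thesis by linarith
  qed
  then show ?thesis using d(1) unfolding sn_ball_def by blast
qed

lemma openin_sn_topologyI:
  assumes pm: "sn_pseudometric V P" and sub: "U \<subseteq> V"
    and nbhd: "\<And>x. x \<in> U \<Longrightarrow> \<exists>F e. finite F \<and> F \<subseteq> P \<and> e > 0 \<and> sn_ball V F x e \<subseteq> U"
  shows "openin (sn_topology V P) U"
proof (subst openin_subopen, intro ballI)
  fix x assume "x \<in> U"
  then obtain F e where Fe: "finite F" "F \<subseteq> P" "e > 0" "sn_ball V F x e \<subseteq> U" using nbhd by meson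
  have "x \<in> V" using \<open>x \<in> U\<close> sub by blast
  then show "\<exists>T. openin (sn_topology V P) T \<and> x \<in> T \<and> T \<subseteq> U"
    using centre_in_sn_ball[OF pm _ Fe(2,3)] openin_sn_ball[OF _ Fe(1-3)] Fe(4) by blast
qed

lemma openin_sn_topologyD:
  assumes pm: "sn_pseudometric V P" and U: "openin (sn_topology V P) U" and x: "x \<in> U"
  shows "\<exists>F e. finite F \<and> F \<subseteq> P \<and> e > 0 \<and> sn_ball V F x e \<subseteq> U"
proof -
  have "generate_topology_on
      {{y \<in> V. \<forall>p\<in>F. p (y - x) < e} | x F e. x \<in> V \<and> finite F \<and> F \<subseteq> P \<and> e > 0} U"
    using U unfolding sn_topology_def by (rule openin_topology_generated_by)
  then have "\<forall>x\<in>U. x \<in> V \<longrightarrow> (\<exists>F e. finite F \<and> F \<subseteq> P \<and> e > 0 \<and> sn_ball V F x e \<subseteq> U)"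
  proof (induction rule: generate_topology_on.induct)
    case (Int a b)
    show ?case
    proof (intro ballI impI)
      fix x assume "x \<in> a \<inter> b" "x \<in> V"
      then obtain F1 e1 F2 e2 where "finite F1" "F1 \<subseteq> P" "e1 > 0" "sn_ball V F1 x e1 \<subseteq> a"
        "finite F2" "F2 \<subseteq> P" "e2 > 0" "sn_ball V F2 x e2 \<subseteq> b"
        using Int.IH by (meson IntD1 IntD2)
      moreover have "sn_ball V (F1 \<union> F2) x (min e1 e2) \<subseteq> sn_ball V F1 x e1 \<inter> sn_ball V F2 x e2"
        unfolding sn_ball_def by auto
      ultimately have "sn_ball V (F1 \<union> F2) x (min e1 e2) \<subseteq> a \<inter> b" by blast
      moreover have "finite (F1 \<union> F2)" "F1 \<union> F2 \<subseteq> P" "min e1 e2 > 0"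
        using \<open>finite F1\<close> \<open>finite F2\<close> \<open>F1 \<subseteq> P\<close> \<open>F2 \<subseteq> P\<close> \<open>e1 > 0\<close> \<open>e2 > 0\<close> by auto
      ultimately show "\<exists>F e. finite F \<and> F \<subseteq> P \<and> e > 0 \<and> sn_ball V F x e \<subseteq> a \<inter> b" by blast
    qed
  next
    case (UN K)
    show ?case
    proof (intro ballI impI)
      fix x assume "x \<in> \<Union>K" "x \<in> V"
      then obtain k where "k \<in> K" "x \<in> k" by blast
      then obtain F e where "finite F" "F \<subseteq> P" "e > 0" "sn_ball V F x e \<subseteq> k"
        using UN.IH \<open>x \<in> V\<close> by meson
      then show "\<exists>F e. finite F \<and> F \<subseteq> P \<and> e > 0 \<and> sn_ball V F x e \<subseteq> \<Union>K"
        using \<open>k \<in> K\<close> by blast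
    qed
  next
    case (Basis s)
    then obtain x0 F0 e0 where s: "s = sn_ball V F0 x0 e0" "x0 \<in> V" "finite F0" "F0 \<subseteq> P"
      unfolding sn_ball_def by auto
    show ?case
    proof (intro ballI impI)
      fix x assume "x \<in> s"
      then obtain d where "d > 0" "sn_ball V F0 x d \<subseteq> s"
        using sn_ball_nbhd[OF pm s(3,4,2)] s(1) by blast
      then show "\<exists>F e. finite F \<and> F \<subseteq> P \<and> e > 0 \<and> sn_ball V F x e \<subseteq> s"
        using s(3,4) by blast
    qed
  qed simp
  moreover have "x \<in> V" using openin_subset[OF U] x by auto
  ultimately show ?thesis using x by blast
qed

lemma continuous_map_sn_euclideanI:
  fixes f :: "'a::ab_group_add \<Rightarrow> 'b::metric_space"
  assumes pm: "sn_pseudometric V P"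
    and cont: "\<And>x \<epsilon>. x \<in> V \<Longrightarrow> \<epsilon> > 0 \<Longrightarrow>
      \<exists>F e. finite F \<and> F \<subseteq> P \<and> e > 0 \<and> (\<forall>y\<in>sn_ball V F x e. dist (f y) (f x) < \<epsilon>)"
  shows "continuous_map (sn_topology V P) euclidean f"
  unfolding continuous_map_def topspace_sn_topology
proof (intro conjI allI impI)
  fix U :: "'b set" assume "openin euclidean U"
  then have "open U" by simp
  show "openin (sn_topology V P) {x \<in> V. f x \<in> U}"
  proof (rule openin_sn_topologyI[OF pm])
    fix x assume "x \<in> {x \<in> V. f x \<in> U}"
    then obtain \<epsilon> where "x \<in> V" "\<epsilon> > 0" "ball (f x) \<epsilon> \<subseteq> U"
      using \<open>open U\<close> open_contains_ball by blast
    then obtain F e where "finite F" "F \<subseteq> P" "e > 0" "\<forall>y\<in>sn_ball V F x e. dist (f y) (f x) < \<epsilon>"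
      using cont by meson
    moreover have "sn_ball V F x e \<subseteq> {x \<in> V. f x \<in> U}"
      using calculation \<open>ball (f x) \<epsilon> \<subseteq> U\<close> sn_ball_subset by (fastforce simp: dist_commute)
    ultimately show "\<exists>F e. finite F \<and> F \<subseteq> P \<and> e > 0 \<and> sn_ball V F x e \<subseteq> {x \<in> V. f x \<in> U}"
      by blast
  qed auto
qed auto

lemma continuous_map_sn_euclideanD:
  fixes f :: "'a::ab_group_add \<Rightarrow> 'b::metric_space"
  assumes pm: "sn_pseudometric V P" and f: "continuous_map (sn_topology V P) euclidean f"
    and x: "x \<in> V" and \<epsilon>: "\<epsilon> > 0"
  shows "\<exists>F e. finite F \<and> F \<subseteq> P \<and> e > 0 \<and> (\<forall>y\<in>sn_ball V F x e. dist (f y) (f x) < \<epsilon>)"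
proof -
  have "openin (sn_topology V P) {y \<in> V. f y \<in> ball (f x) \<epsilon>}"
    using f unfolding continuous_map_def topspace_sn_topology by (metis open_ball open_openin)
  moreover have "x \<in> {y \<in> V. f y \<in> ball (f x) \<epsilon>}" using x \<epsilon> by simp
  ultimately obtain F e where "finite F" "F \<subseteq> P" "e > 0"
    "sn_ball V F x e \<subseteq> {y \<in> V. f y \<in> ball (f x) \<epsilon>}"
    using openin_sn_topologyD[OF pm] by meson
  then show ?thesis by (auto simp: dist_commute)
qed

section \<open>Rigged Hilbert spaces\<close>

locale rigged_hilbert_space = complex_hilbert_space sc ip
  for sc :: "complex \<Rightarrow> 'h::ab_group_add \<Rightarrow> 'h" and ip +
  fixes D :: "'h set" and P :: "('h \<Rightarrow> real) set"
  assumes rigged: "rigged_hilbert sc ip D P"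
begin

abbreviation "tD \<equiv> sn_topology D P"
abbreviation "Dx \<equiv> conj_dual sc D P"
abbreviation "Qx \<equiv> strong_seminorms D P"

lemma subspace_D: "cvsubspace sc D"
  and seminorm_P: "p \<in> P \<Longrightarrow> is_seminorm sc D p"
  and dense_D: "(htop ip) closure_of D = UNIV"
  and tD_finer: "openin (htop ip) U \<Longrightarrow> openin tD (U \<inter> D)"
  using rigged unfolding rigged_hilbert_def by blast+

lemma zero_in_D [simp]: "0 \<in> D"
  and add_in_D: "x \<in> D \<Longrightarrow> y \<in> D \<Longrightarrow> x + y \<in> D"
  and sc_in_D: "x \<in> D \<Longrightarrow> sc c x \<in> D"
  using subspace_D unfolding cvsubspace_def by blast+

lemma diff_in_D: "x \<in> D \<Longrightarrow> y \<in> D \<Longrightarrow> x - y \<in> D"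
  using add_in_D[of x "- y"] sc_in_D[of y "-1"] by (simp add: sc_minus_one)

lemma sum_in_D: "(\<And>i. i \<in> A \<Longrightarrow> f i \<in> D) \<Longrightarrow> sum f A \<in> D"
  by (induction A rule: infinite_finite_induct) (auto intro: add_in_D)

lemma seminorm_nonneg: "p \<in> P \<Longrightarrow> x \<in> D \<Longrightarrow> p x \<ge> 0"
  and seminorm_sc: "p \<in> P \<Longrightarrow> x \<in> D \<Longrightarrow> p (sc c x) = cmod c * p x"
  and seminorm_triangle: "p \<in> P \<Longrightarrow> x \<in> D \<Longrightarrow> y \<in> D \<Longrightarrow> p (x + y) \<le> p x + p y"
  using seminorm_P unfolding is_seminorm_def by blast+

lemma sn_pseudometric_D: "sn_pseudometric D P"
  unfolding sn_pseudometric_def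
proof (intro ballI conjI)
  fix p x y z assume "p \<in> P" "x \<in> D" "y \<in> D" "z \<in> D"
  then show "p (x - z) \<le> p (x - y) + p (y - z)"
    using seminorm_triangle[of p "x - y" "y - z"] diff_in_D by simp
next
  fix p assume "p \<in> P"
  then show "p 0 = 0" using seminorm_sc[of p 0 0] by simp
qed

lemma sn_pseudometric_hnorm: "sn_pseudometric UNIV {hnorm ip}"
  unfolding sn_pseudometric_def using hnorm_triangle_diff by simp

lemma topspace_htop [simp]: "topspace (htop ip) = UNIV"
  unfolding htop_def by simp

lemma openin_hnorm_ball: "openin (htop ip) {y. hnorm ip (y - x) < e}"
proof (cases "e > 0")
  case True
  then show ?thesis
    using openin_sn_ball[of x UNIV "{hnorm ip}" "{hnorm ip}" e] unfolding htop_def sn_ball_def by simp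
next
  case False
  then have "\<not> hnorm ip (y - x) < e" for y using hnorm_nonneg[of "y - x"] by linarith
  then show ?thesis by simp
qed

lemma continuous_map_htopD:
  assumes T: "continuous_map tD (htop ip) T" and x: "x \<in> D" and \<epsilon>: "\<epsilon> > 0"
  shows "\<exists>F e. finite F \<and> F \<subseteq> P \<and> e > 0 \<and> (\<forall>y\<in>sn_ball D F x e. hnorm ip (T y - T x) < \<epsilon>)"
proof -
  have "openin tD {y \<in> topspace tD. T y \<in> {z. hnorm ip (z - T x) < \<epsilon>}}"
    using T openin_hnorm_ball unfolding continuous_map_def by blast
  then have "openin tD {y \<in> D. hnorm ip (T y - T x) < \<epsilon>}" by simp
  moreover have "x \<in> {y \<in> D. hnorm ip (T y - T x) < \<epsilon>}" using x \<epsilon> by simp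
  ultimately obtain F e where "finite F" "F \<subseteq> P" "e > 0"
    "sn_ball D F x e \<subseteq> {y \<in> D. hnorm ip (T y - T x) < \<epsilon>}"
    using openin_sn_topologyD[OF sn_pseudometric_D] by meson
  then show ?thesis by auto
qed

lemma limitin_tD_imp_hlim:
  assumes lim: "limitin tD s f sequentially"
  shows "hlim s f"
  unfolding hlim_def
proof (rule LIMSEQ_I)
  fix e :: real assume "e > 0"
  have "f \<in> D" using limitin_topspace[OF lim] by simp
  then have "openin tD ({y. hnorm ip (y - f) < e} \<inter> D)" "f \<in> {y. hnorm ip (y - f) < e} \<inter> D"
    using tD_finer[OF openin_hnorm_ball] \<open>e > 0\<close> by auto
  then have "eventually (\<lambda>n. s n \<in> {y. hnorm ip (y - f) < e} \<inter> D) sequentially"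
    using lim unfolding limitin_def by blast
  then have "eventually (\<lambda>n. norm (hnorm ip (s n - f) - 0) < e) sequentially"
    by (rule eventually_mono) (simp add: hnorm_nonneg)
  then show "\<exists>N. \<forall>n\<ge>N. norm (hnorm ip (s n - f) - 0) < e"
    unfolding eventually_sequentially .
qed

lemma limitin_tD_unique:
  "limitin tD s a sequentially \<Longrightarrow> limitin tD s b sequentially \<Longrightarrow> a = b"
  using limitin_tD_imp_hlim hlim_unique by blast

text \<open>Rescale \<open>y\<close> into the basic ball around \<open>0\<close> on which \<open>q \<le> 1\<close>.\<close>
lemma homogeneous_le_sum_seminorms:
  assumes hom: "\<And>c y. y \<in> D \<Longrightarrow> q (sc c y) = cmod c * q y"
    and F: "finite F" "F \<subseteq> P" and e: "e > 0"
    and le1: "\<And>y. y \<in> sn_ball D F 0 e \<Longrightarrow> q y \<le> 1"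
    and y: "y \<in> D"
  shows "q y \<le> (2 / e) * (\<Sum>p\<in>F. p y)"
proof -
  define s where "s = (\<Sum>p\<in>F. p y)"
  have p_le_s: "p y \<le> s" if "p \<in> F" for p
    unfolding s_def using F y seminorm_nonneg that by (intro member_le_sum) auto
  have scaled: "t * q y \<le> 1" if "t > 0" "t * s < e" for t
  proof -
    have "p (sc (complex_of_real t) y) < e" if "p \<in> F" for p
    proof -
      have "p \<in> P" using F(2) that by blast
      then have "p (sc (complex_of_real t) y) = t * p y" using seminorm_sc[of p y] y \<open>t > 0\<close> by simp
      moreover have "t * p y \<le> t * s" using p_le_s[OF that] \<open>t > 0\<close> by simp
      ultimately show ?thesis using \<open>t * s < e\<close> by linarith
    qed
    then have "sc (complex_of_real t) y \<in> sn_ball D F 0 e"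
      unfolding sn_ball_def using y sc_in_D by simp
    then show ?thesis using le1 hom[OF y] \<open>t > 0\<close> by fastforce
  qed
  have s0: "s \<ge> 0" unfolding s_def using F y seminorm_nonneg by (auto intro: sum_nonneg)
  show ?thesis
  proof (cases "s = 0")
    case True
    have "q y \<le> 0"
    proof (rule ccontr)
      assume "\<not> q y \<le> 0"
      then show False using scaled[of "2 / q y"] True e by simp
    qed
    then show ?thesis using True unfolding s_def by simp
  next
    case False
    then have "s > 0" using s0 by simp
    then have "e / (2 * s) * q y \<le> 1" using e by (intro scaled) (auto simp: field_simps)
    then show ?thesis using \<open>s > 0\<close> e unfolding s_def by (simp add: field_simps)
  qed
qed

lemma continuous_homogeneous_dominated:
  assumes cont: "continuous_map tD euclidean q"
    and hom: "\<And>c y. y \<in> D \<Longrightarrow> q (sc c y) = cmod c * q y"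
  shows "\<exists>F C. finite F \<and> F \<subseteq> P \<and> C \<ge> 0 \<and> (\<forall>y\<in>D. q y \<le> C * (\<Sum>p\<in>F. p y))"
proof -
  have "q 0 = 0" using hom[of 0 0] by simp
  obtain F e where F: "finite F" "F \<subseteq> P" "e > 0" "\<forall>y\<in>sn_ball D F 0 e. dist (q y) (q 0) < 1"
    using continuous_map_sn_euclideanD[OF sn_pseudometric_D cont zero_in_D, of 1] by auto
  then have "q y \<le> 1" if "y \<in> sn_ball D F 0 e" for y
    using that \<open>q 0 = 0\<close> by (fastforce simp: dist_real_def)
  then have "\<forall>y\<in>D. q y \<le> (2 / e) * (\<Sum>p\<in>F. p y)"
    using homogeneous_le_sum_seminorms[OF hom F(1-3)] by blast
  then show ?thesis using F(1-3) by (intro exI[of _ F] exI[of _ "2 / e"]) simp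
qed

lemma dominated_imp_continuous:
  assumes tri: "\<And>x y. x \<in> D \<Longrightarrow> y \<in> D \<Longrightarrow> \<bar>q x - q y\<bar> \<le> q (x - y)"
    and F: "finite F" "F \<subseteq> P" and C: "C \<ge> 0"
    and dom: "\<And>y. y \<in> D \<Longrightarrow> q y \<le> C * (\<Sum>p\<in>F. p y)"
  shows "continuous_map tD euclidean q"
proof (rule continuous_map_sn_euclideanI[OF sn_pseudometric_D])
  fix x and \<epsilon> :: real assume x: "x \<in> D" and \<epsilon>: "\<epsilon> > 0"
  define d where "d = \<epsilon> / (C * real (card F) + 1)"
  have pos: "C * real (card F) + 1 > 0" using C by (simp add: add_nonneg_pos)
  then have "d > 0" unfolding d_def using \<epsilon> by simp
  have "(C * real (card F)) * d < (C * real (card F) + 1) * d" using \<open>d > 0\<close> by simp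
  also have "\<dots> = \<epsilon>" unfolding d_def using pos by simp
  finally have d: "d > 0" "(C * real (card F)) * d < \<epsilon>" using \<open>d > 0\<close> by auto
  have "dist (q y) (q x) < \<epsilon>" if y: "y \<in> sn_ball D F x d" for y
  proof -
    have yD: "y \<in> D" and near: "\<forall>p\<in>F. p (y - x) < d" using y unfolding sn_ball_def by auto
    have "(\<Sum>p\<in>F. p (y - x)) \<le> real (card F) * d"
      using sum_mono[of F "\<lambda>p. p (y - x)" "\<lambda>_. d"] near by fastforce
    then have "C * (\<Sum>p\<in>F. p (y - x)) \<le> (C * real (card F)) * d"
      using C by (metis mult.assoc mult_left_mono)
    then show ?thesis
      using tri[OF yD x] dom[OF diff_in_D[OF yD x]] d(2) by (simp add: dist_real_def)
  qed
  then show "\<exists>F e. finite F \<and> F \<subseteq> P \<and> e > 0 \<and> (\<forall>y\<in>sn_ball D F x e. dist (q y) (q x) < \<epsilon>)"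
    using F d(1) by blast
qed

lemma dominated_bdd_on_bounded:
  assumes B: "B \<subseteq> D" "sn_bounded P B" and F: "finite F" "F \<subseteq> P" and C: "C \<ge> 0"
    and dom: "\<And>y. y \<in> D \<Longrightarrow> q y \<le> C * (\<Sum>p\<in>F. p y)"
  shows "\<exists>K. \<forall>y\<in>B. q y \<le> K"
proof -
  have "q y \<le> C * (\<Sum>p\<in>F. Sup (p ` B))" if y: "y \<in> B" for y
  proof -
    have "p y \<le> Sup (p ` B)" if "p \<in> F" for p
      using B(2) F(2) that y unfolding sn_bounded_def by (auto intro: cSUP_upper2)
    then have "(\<Sum>p\<in>F. p y) \<le> (\<Sum>p\<in>F. Sup (p ` B))" by (rule sum_mono)
    then show ?thesis using dom[of y] y B(1) C by (meson in_mono mult_left_mono order_trans)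
  qed
  then show ?thesis by blast
qed

lemma conj_dual_add: "\<Phi> \<in> Dx \<Longrightarrow> x \<in> D \<Longrightarrow> y \<in> D \<Longrightarrow> \<Phi> (x + y) = \<Phi> x + \<Phi> y"
  and conj_dual_sc: "\<Phi> \<in> Dx \<Longrightarrow> x \<in> D \<Longrightarrow> \<Phi> (sc c x) = cnj c * \<Phi> x"
  and conj_dual_outside: "\<Phi> \<in> Dx \<Longrightarrow> x \<notin> D \<Longrightarrow> \<Phi> x = 0"
  and conj_dual_continuous: "\<Phi> \<in> Dx \<Longrightarrow> continuous_map tD euclidean \<Phi>"
  unfolding conj_dual_def by simp_all

lemma conj_dual_zero: "\<Phi> \<in> Dx \<Longrightarrow> \<Phi> 0 = 0"
  using conj_dual_sc[of \<Phi> 0 0] by simp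

lemma conj_dual_diff: "\<Phi> \<in> Dx \<Longrightarrow> x \<in> D \<Longrightarrow> y \<in> D \<Longrightarrow> \<Phi> (x - y) = \<Phi> x - \<Phi> y"
  using conj_dual_add[of \<Phi> x "- y"] conj_dual_sc[of \<Phi> y "-1"] sc_in_D[of y "-1"]
  by (simp add: sc_minus_one)

lemma conj_dual_sum:
  assumes \<Phi>: "\<Phi> \<in> Dx" and x: "\<And>i. i \<in> A \<Longrightarrow> x i \<in> D"
  shows "\<Phi> (\<Sum>i\<in>A. sc (c i) (x i)) = (\<Sum>i\<in>A. cnj (c i) * \<Phi> (x i))"
  using x
proof (induction A rule: infinite_finite_induct)
  case (insert a A)
  then show ?case
    using \<Phi> by (simp add: conj_dual_add conj_dual_sc sc_in_D sum_in_D)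
qed (simp_all add: conj_dual_zero[OF \<Phi>])

lemma lincomb_in_conj_dual:
  assumes \<Phi>: "\<And>n. \<Phi> n \<in> Dx" and A: "finite A"
  shows "(\<lambda>f. \<Sum>n\<in>A. a n * \<Phi> n f) \<in> Dx"
  unfolding conj_dual_def
proof (intro CollectI conjI ballI allI impI)
  fix x y assume "x \<in> D" "y \<in> D"
  then show "(\<Sum>n\<in>A. a n * \<Phi> n (x + y)) = (\<Sum>n\<in>A. a n * \<Phi> n x) + (\<Sum>n\<in>A. a n * \<Phi> n y)"
    using \<Phi> by (simp add: conj_dual_add distrib_left sum.distrib)
next
  fix c x assume "x \<in> D"
  then show "(\<Sum>n\<in>A. a n * \<Phi> n (sc c x)) = cnj c * (\<Sum>n\<in>A. a n * \<Phi> n x)"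
    using \<Phi> by (simp add: conj_dual_sc sum_distrib_left mult.left_commute)
next
  fix x assume "x \<notin> D"
  then show "(\<Sum>n\<in>A. a n * \<Phi> n x) = 0" using \<Phi> by (simp add: conj_dual_outside)
next
  have "continuous_map tD euclidean (\<lambda>f. a n * \<Phi> n f)" for n
    using conj_dual_continuous[OF \<Phi>] by (simp add: continuous_map_atin tendsto_mult_left)
  then show "continuous_map tD euclidean (\<lambda>f. \<Sum>n\<in>A. a n * \<Phi> n f)"
    using A by (intro continuous_map_sum)
qed

lemma conj_dual_bounded_on_bounded:
  assumes \<Phi>: "\<Phi> \<in> Dx" and B: "B \<subseteq> D" "sn_bounded P B"
  shows "bdd_above ((\<lambda>v. cmod (\<Phi> v)) ` B)"
proof -
  have "continuous_map tD euclidean (\<lambda>x. cmod (\<Phi> x))"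
    by (rule continuous_map_norm[OF conj_dual_continuous[OF \<Phi>]])
  moreover have "\<And>c y. y \<in> D \<Longrightarrow> cmod (\<Phi> (sc c y)) = cmod c * cmod (\<Phi> y)"
    using \<Phi> by (simp add: conj_dual_sc norm_mult)
  ultimately have "\<exists>F C. finite F \<and> F \<subseteq> P \<and> C \<ge> 0 \<and> (\<forall>y\<in>D. cmod (\<Phi> y) \<le> C * (\<Sum>p\<in>F. p y))"
    by (rule continuous_homogeneous_dominated)
  then obtain F C where F: "finite F" "F \<subseteq> P" and C: "C \<ge> 0"
    and dom: "\<forall>y\<in>D. cmod (\<Phi> y) \<le> C * (\<Sum>p\<in>F. p y)"
    by blast
  obtain K where "\<forall>y\<in>B. cmod (\<Phi> y) \<le> K"
    using dominated_bdd_on_bounded[OF B F C, of "\<lambda>y. cmod (\<Phi> y)"] dom by blast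
  then show ?thesis by (auto intro: bdd_aboveI2)
qed

lemma continuous_map_hnorm_Lipschitz:
  fixes q :: "'h \<Rightarrow> 'b::metric_space"
  assumes T: "continuous_map tD (htop ip) T"
    and Lip: "\<And>f g. f \<in> D \<Longrightarrow> g \<in> D \<Longrightarrow> dist (q g) (q f) \<le> C * hnorm ip (T g - T f)"
  shows "continuous_map tD euclidean q"
proof (rule continuous_map_sn_euclideanI[OF sn_pseudometric_D])
  fix x and \<epsilon> :: real assume x: "x \<in> D" and \<epsilon>: "\<epsilon> > 0"
  define M where "M = max C 0 + 1"
  have M: "M > 0" unfolding M_def by simp
  obtain F e where F: "finite F" "F \<subseteq> P" "e > 0"
    "\<forall>y\<in>sn_ball D F x e. hnorm ip (T y - T x) < \<epsilon> / M"
    using continuous_map_htopD[OF T x, of "\<epsilon> / M"] \<epsilon> M by auto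
  have "dist (q y) (q x) < \<epsilon>" if y: "y \<in> sn_ball D F x e" for y
  proof -
    have "dist (q y) (q x) \<le> C * hnorm ip (T y - T x)"
      using Lip[OF x] y sn_ball_subset by blast
    also have "\<dots> \<le> M * hnorm ip (T y - T x)"
      unfolding M_def using hnorm_nonneg by (intro mult_right_mono) auto
    also have "\<dots> < M * (\<epsilon> / M)" using F(4) y M by (intro mult_strict_left_mono) auto
    finally show ?thesis using M by simp
  qed
  then show "\<exists>F e. finite F \<and> F \<subseteq> P \<and> e > 0 \<and> (\<forall>y\<in>sn_ball D F x e. dist (q y) (q x) < \<epsilon>)"
    using F(1-3) by blast
qed

lemma C_DH_add: "in_C_DH sc ip D P T \<Longrightarrow> x \<in> D \<Longrightarrow> y \<in> D \<Longrightarrow> T (x + y) = T x + T y"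
  and C_DH_sc: "in_C_DH sc ip D P T \<Longrightarrow> x \<in> D \<Longrightarrow> T (sc c x) = sc c (T x)"
  and C_DH_continuous: "in_C_DH sc ip D P T \<Longrightarrow> continuous_map tD (htop ip) T"
  unfolding in_C_DH_def by simp_all

lemma diff_in_conj_dual:
  assumes \<Phi>: "\<Phi> \<in> Dx" and \<Psi>: "\<Psi> \<in> Dx"
  shows "\<Phi> - \<Psi> \<in> Dx"
  unfolding conj_dual_def
proof (intro CollectI conjI ballI allI impI)
  show "continuous_map tD euclidean (\<Phi> - \<Psi>)"
    unfolding fun_diff_def using \<Phi> \<Psi> by (intro continuous_map_diff conj_dual_continuous)
qed (simp_all add: \<Phi> \<Psi> conj_dual_add conj_dual_sc conj_dual_outside right_diff_distrib)

lemma ip_C_DH_in_conj_dual: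
  assumes T: "in_C_DH sc ip D P T"
  shows "(\<lambda>f. if f \<in> D then ip h (T f) else 0) \<in> Dx"
  unfolding conj_dual_def
proof (intro CollectI conjI ballI allI impI)
  show "continuous_map tD euclidean (\<lambda>f. if f \<in> D then ip h (T f) else 0)"
  proof (rule continuous_map_hnorm_Lipschitz[OF C_DH_continuous[OF T]])
    fix f g assume "f \<in> D" "g \<in> D"
    then show "dist (if g \<in> D then ip h (T g) else 0) (if f \<in> D then ip h (T f) else 0)
        \<le> hnorm ip h * hnorm ip (T g - T f)"
      using cmod_ip_le[of h "T g - T f"] by (simp add: dist_norm ip_diff_right)
  qed
qed (auto simp: add_in_D sc_in_D C_DH_add[OF T] C_DH_sc[OF T] ip_add_right ip_sc_right)

lemma strong_dual_preimage_nbhd: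
  assumes S: "\<And>f. f \<in> D \<Longrightarrow> S f \<in> Dx"
    and T: "continuous_map tD (htop ip) T"
    and bound: "\<And>q f \<Psi>. q \<in> Qx \<Longrightarrow> f \<in> D \<Longrightarrow> \<Psi> \<in> Dx \<Longrightarrow>
        \<exists>M\<ge>0. \<forall>g\<in>D. q (S g - \<Psi>) \<le> q (S f - \<Psi>) + M * hnorm ip (T g - T f)"
    and \<Psi>: "\<Psi> \<in> Dx" and F: "finite F" "F \<subseteq> Qx"
    and f: "f \<in> D" "\<forall>q\<in>F. q (S f - \<Psi>) < e"
  shows "\<exists>F' r. finite F' \<and> F' \<subseteq> P \<and> r > 0 \<and> (\<forall>g\<in>sn_ball D F' f r. \<forall>q\<in>F. q (S g - \<Psi>) < e)"
proof -
  obtain d where d: "d > 0" "\<forall>q\<in>F. q (S f - \<Psi>) + d \<le> e"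
    using finite_less_margin[OF F(1) f(2)] by blast
  have "\<forall>q\<in>F. \<exists>M\<ge>0. \<forall>g\<in>D. q (S g - \<Psi>) \<le> q (S f - \<Psi>) + M * hnorm ip (T g - T f)"
    using bound \<Psi> F(2) f(1) by blast
  then obtain M where M: "\<forall>q\<in>F. M q \<ge> 0 \<and> (\<forall>g\<in>D. q (S g - \<Psi>) \<le> q (S f - \<Psi>) + M q * hnorm ip (T g - T f))"
    by (rule bchoice_iff[THEN iffD1, elim_format]) blast
  define Mt where "Mt = (\<Sum>q\<in>F. M q) + 1"
  have "M q \<le> (\<Sum>q\<in>F. M q)" if "q \<in> F" for q
    using M F(1) that by (intro member_le_sum) auto
  moreover have "(\<Sum>q\<in>F. M q) \<ge> 0" using M by (simp add: sum_nonneg)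
  ultimately have Mt: "Mt > 0" "\<forall>q\<in>F. M q \<le> Mt" unfolding Mt_def by force+
  obtain F' r where F': "finite F'" "F' \<subseteq> P" "r > 0"
    "\<forall>g\<in>sn_ball D F' f r. hnorm ip (T g - T f) < d / Mt"
    using continuous_map_htopD[OF T f(1), of "d / Mt"] d(1) Mt(1) by auto
  have "q (S g - \<Psi>) < e" if g: "g \<in> sn_ball D F' f r" and q: "q \<in> F" for g q
  proof -
    have gD: "g \<in> D" using g sn_ball_subset by blast
    have "M q * hnorm ip (T g - T f) \<le> Mt * hnorm ip (T g - T f)"
      using Mt(2) q hnorm_nonneg by (intro mult_right_mono) auto
    also have "\<dots> < Mt * (d / Mt)" using F'(4) g Mt(1) by (intro mult_strict_left_mono) auto
    finally have "M q * hnorm ip (T g - T f) < d" using Mt(1) by simp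
    then show ?thesis using M q gD d(2) by fastforce
  qed
  then show ?thesis using F'(1-3) by blast
qed

lemma continuous_map_into_strong_dual:
  assumes S: "\<And>f. f \<in> D \<Longrightarrow> S f \<in> Dx"
    and T: "continuous_map tD (htop ip) T"
    and bound: "\<And>q f \<Psi>. q \<in> Qx \<Longrightarrow> f \<in> D \<Longrightarrow> \<Psi> \<in> Dx \<Longrightarrow>
        \<exists>M\<ge>0. \<forall>g\<in>D. q (S g - \<Psi>) \<le> q (S f - \<Psi>) + M * hnorm ip (T g - T f)"
  shows "continuous_map tD (sn_topology Dx Qx) S"
  unfolding sn_topology_def[of Dx Qx]
proof (rule continuous_on_generated_topo)
  have "\<Union>{{y \<in> Dx. \<forall>p\<in>F. p (y - x) < e} | x F e. x \<in> Dx \<and> finite F \<and> F \<subseteq> Qx \<and> e > 0} = Dx"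
    using topspace_sn_topology[of Dx Qx] unfolding sn_topology_def topology_generated_by_topspace .
  then show "S ` topspace tD \<subseteq>
      \<Union>{{y \<in> Dx. \<forall>p\<in>F. p (y - x) < e} | x F e. x \<in> Dx \<and> finite F \<and> F \<subseteq> Qx \<and> e > 0}"
    using S by auto
  fix U assume "U \<in> {{y \<in> Dx. \<forall>p\<in>F. p (y - x) < e} | x F e. x \<in> Dx \<and> finite F \<and> F \<subseteq> Qx \<and> e > 0}"
  then obtain \<Psi> F e where U: "U = {y \<in> Dx. \<forall>p\<in>F. p (y - \<Psi>) < e}" "\<Psi> \<in> Dx" "finite F" "F \<subseteq> Qx"
    by auto
  show "openin tD (S -` U \<inter> topspace tD)"
  proof (rule openin_sn_topologyI[OF sn_pseudometric_D])
    fix f assume "f \<in> S -` U \<inter> topspace tD"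
    then have f: "f \<in> D" "\<forall>q\<in>F. q (S f - \<Psi>) < e" using U by auto
    obtain F' r where F': "finite F'" "F' \<subseteq> P" "r > 0"
      and near: "\<forall>g\<in>sn_ball D F' f r. \<forall>q\<in>F. q (S g - \<Psi>) < e"
      using strong_dual_preimage_nbhd[where S=S and T=T, OF S T bound U(2-4) f] by blast
    have "g \<in> S -` U \<inter> topspace tD" if g: "g \<in> sn_ball D F' f r" for g
    proof -
      have "g \<in> D" using g sn_ball_subset by blast
      then show ?thesis unfolding U(1) using S near g by simp
    qed
    then show "\<exists>F e. finite F \<and> F \<subseteq> P \<and> e > 0 \<and> sn_ball D F f e \<subseteq> S -` U \<inter> topspace tD"
      using F' by blast
  qed simp
qed


lemma C_DH_bounded_on_bounded:
  assumes T: "in_C_DH sc ip D P T" and B: "B \<subseteq> D" "sn_bounded P B"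
  shows "\<exists>K. \<forall>v\<in>B. hnorm ip (T v) \<le> K"
proof -
  have "continuous_map tD euclidean (\<lambda>f. hnorm ip (T f))"
    by (rule continuous_map_hnorm_Lipschitz[OF C_DH_continuous[OF T], where C=1])
      (simp add: dist_real_def hnorm_rev_triangle)
  moreover have "\<And>c y. y \<in> D \<Longrightarrow> hnorm ip (T (sc c y)) = cmod c * hnorm ip (T y)"
    by (simp add: C_DH_sc[OF T] hnorm_sc)
  ultimately have "\<exists>F C. finite F \<and> F \<subseteq> P \<and> C \<ge> 0 \<and> (\<forall>y\<in>D. hnorm ip (T y) \<le> C * (\<Sum>p\<in>F. p y))"
    by (rule continuous_homogeneous_dominated)
  then obtain F C where F: "finite F" "F \<subseteq> P" and C: "C \<ge> 0"
    and dom: "\<forall>y\<in>D. hnorm ip (T y) \<le> C * (\<Sum>p\<in>F. p y)"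
    by blast
  show ?thesis using dominated_bdd_on_bounded[OF B F C, of "\<lambda>v. hnorm ip (T v)"] dom by blast
qed

text \<open>Cauchy--Schwarz, with \<open>M\<close> a bound for \<open>\<parallel>T v\<parallel>\<close> on the bounded set \<open>B\<close>.\<close>
lemma strong_seminorm_ip_C_DH_bound:
  assumes T: "in_C_DH sc ip D P T" and q: "q \<in> Qx" and f: "f \<in> D" and \<Psi>: "\<Psi> \<in> Dx"
  defines "S \<equiv> \<lambda>f g. if g \<in> D then ip (T f) (T g) else 0"
  shows "\<exists>M\<ge>0. \<forall>g\<in>D. q (S g - \<Psi>) \<le> q (S f - \<Psi>) + M * hnorm ip (T g - T f)"
proof -
  obtain B where B: "q = (\<lambda>\<Phi>. Sup ((\<lambda>v. cmod (\<Phi> v)) ` B))" "B \<noteq> {}" "B \<subseteq> D" "sn_bounded P B"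
    using q unfolding strong_seminorms_def by blast
  obtain K where K: "\<forall>v\<in>B. hnorm ip (T v) \<le> K"
    using C_DH_bounded_on_bounded[OF T B(3,4)] by blast
  define M where "M = max K 0"
  have "S f - \<Psi> \<in> Dx"
    unfolding S_def by (rule diff_in_conj_dual[OF ip_C_DH_in_conj_dual[OF T] \<Psi>])
  then have bdd: "bdd_above ((\<lambda>v. cmod ((S f - \<Psi>) v)) ` B)"
    by (rule conj_dual_bounded_on_bounded[OF _ B(3,4)])
  have "q (S g - \<Psi>) \<le> q (S f - \<Psi>) + M * hnorm ip (T g - T f)" if g: "g \<in> D" for g
    unfolding B(1)
  proof (rule cSUP_least[OF B(2)])
    fix v assume v: "v \<in> B"
    then have "(S g - \<Psi>) v = ip (T g - T f) (T v) + (S f - \<Psi>) v"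
      using B(3) unfolding S_def by (auto simp: ip_diff_left)
    then have "cmod ((S g - \<Psi>) v) \<le> cmod (ip (T g - T f) (T v)) + cmod ((S f - \<Psi>) v)"
      by (metis norm_triangle_ineq)
    also have "cmod (ip (T g - T f) (T v)) \<le> hnorm ip (T g - T f) * M"
    proof -
      have "hnorm ip (T v) \<le> M" using K v unfolding M_def by fastforce
      then have "hnorm ip (T g - T f) * hnorm ip (T v) \<le> hnorm ip (T g - T f) * M"
        using hnorm_nonneg by (rule mult_left_mono)
      then show ?thesis using cmod_ip_le[of "T g - T f" "T v"] by linarith
    qed
    also have "cmod ((S f - \<Psi>) v) \<le> Sup ((\<lambda>v. cmod ((S f - \<Psi>) v)) ` B)"
      using v bdd by (rule cSUP_upper)
    finally show "cmod ((S g - \<Psi>) v) \<le> Sup ((\<lambda>v. cmod ((S f - \<Psi>) v)) ` B) + M * hnorm ip (T g - T f)"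
      by (simp add: mult.commute)
  qed
  moreover have "M \<ge> 0" unfolding M_def by simp
  ultimately show ?thesis by blast
qed

lemma continuous_map_htopI:
  assumes q: "continuous_map tD euclidean q" "q 0 = 0"
    and bound: "\<And>f g. f \<in> D \<Longrightarrow> g \<in> D \<Longrightarrow> hnorm ip (T g - T f) \<le> q (g - f)"
  shows "continuous_map tD (htop ip) T"
  unfolding continuous_map_def
proof (intro conjI allI impI)
  fix U assume "openin (htop ip) U"
  then have U: "openin (sn_topology UNIV {hnorm ip}) U" unfolding htop_def .
  show "openin tD {x \<in> topspace tD. T x \<in> U}"
  proof (rule openin_sn_topologyI[OF sn_pseudometric_D])
    fix f assume "f \<in> {x \<in> topspace tD. T x \<in> U}"
    then have f: "f \<in> D" "T f \<in> U" by auto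
    obtain F r where F: "F \<subseteq> {hnorm ip}" "r > 0" "sn_ball UNIV F (T f) r \<subseteq> U"
      using openin_sn_topologyD[OF sn_pseudometric_hnorm U f(2)] by blast
    obtain F' d where F': "finite F'" "F' \<subseteq> P" "d > 0" "\<forall>h\<in>sn_ball D F' 0 d. dist (q h) (q 0) < r"
      using continuous_map_sn_euclideanD[OF sn_pseudometric_D q(1) zero_in_D F(2)] by blast
    have "T g \<in> U" if g: "g \<in> sn_ball D F' f d" for g
    proof -
      have gD: "g \<in> D" using g sn_ball_subset by blast
      then have "g - f \<in> sn_ball D F' 0 d" using g diff_in_D[OF gD f(1)] unfolding sn_ball_def by simp
      then have "dist (q (g - f)) (q 0) < r" using F'(4) by blast
      then have "q (g - f) < r" using q(2) by (simp add: dist_real_def abs_less_iff)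
      then have "hnorm ip (T g - T f) < r" using bound[OF f(1) gD] by linarith
      then show ?thesis using F(1,3) unfolding sn_ball_def by auto
    qed
    moreover have "sn_ball D F' f d \<subseteq> D" by (rule sn_ball_subset)
    ultimately have "sn_ball D F' f d \<subseteq> {x \<in> topspace tD. T x \<in> U}" by auto
    then show "\<exists>F e. finite F \<and> F \<subseteq> P \<and> e > 0 \<and> sn_ball D F f e \<subseteq> {x \<in> topspace tD. T x \<in> U}"
      using F'(1-3) by blast
  qed simp
qed simp

lemma strong_seminorm_of_bounded:
  "B \<noteq> {} \<Longrightarrow> B \<subseteq> D \<Longrightarrow> sn_bounded P B \<Longrightarrow> (\<lambda>\<Phi>. Sup ((\<lambda>v. cmod (\<Phi> v)) ` B)) \<in> Qx"
  unfolding strong_seminorms_def by (intro CollectI exI[of _ B]) simp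

lemma bdd_above_strongly_bounded:
  assumes A: "sn_bounded Qx A" and y: "y \<in> D"
  shows "bdd_above ((\<lambda>\<Phi>. cmod (\<Phi> y)) ` A)"
proof -
  have "(\<lambda>\<Phi>. Sup ((\<lambda>v. cmod (\<Phi> v)) ` {y})) \<in> Qx"
    using y by (intro strong_seminorm_of_bounded) (auto simp: sn_bounded_def)
  then show ?thesis using A unfolding sn_bounded_def by simp
qed

text \<open>Strongly bounded subsets of \<open>\<D>\<^sup>\<times>\<close> are equicontinuous when \<open>\<D>\<close> is reflexive: the canonical map
  \<open>J : \<D> \<rightarrow> \<D>\<^sup>\<times>\<^sup>\<times>\<close> is continuous, and the strong seminorm of \<open>\<D>\<^sup>\<times>\<^sup>\<times>\<close> attached to \<open>A\<close> pulls back to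
  a neighbourhood of \<open>0\<close> in \<open>\<D>\<close> on which all of \<open>A\<close> is uniformly small.\<close>
lemma reflexive_strongly_bounded_equicontinuous:
  assumes refl: "sn_reflexive sc D P" and A: "A \<noteq> {}" "A \<subseteq> Dx" "sn_bounded Qx A"
  shows "\<exists>F e. finite F \<and> F \<subseteq> P \<and> e > 0 \<and> (\<forall>y\<in>sn_ball D F 0 e. \<forall>\<Phi>\<in>A. cmod (\<Phi> y) < 1)"
proof -
  define Vxx where "Vxx = lin_dual fsc Dx Qx"
  define R where "R = strong_seminorms Dx Qx"
  define J where "J = (\<lambda>f (\<Phi>::'h \<Rightarrow> complex). if \<Phi> \<in> Dx then \<Phi> f else 0)"
  have "bij_betw J D Vxx \<and> homeomorphic_map tD (sn_topology Vxx R) J"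
    using refl unfolding sn_reflexive_def Let_def Vxx_def R_def J_def by simp
  then have J: "continuous_map tD (sn_topology Vxx R) J" and J0: "J 0 \<in> Vxx"
    using homeomorphic_imp_continuous_map unfolding bij_betw_def by auto
  have J0_eq: "J 0 = (\<lambda>\<Phi>. 0)" unfolding J_def using conj_dual_zero by auto
  define rA where "rA = (\<lambda>y::('h \<Rightarrow> complex) \<Rightarrow> complex. Sup ((\<lambda>\<Phi>. cmod (y \<Phi>)) ` A))"
  have "rA \<in> R"
    unfolding rA_def R_def strong_seminorms_def[of Dx Qx] by (intro CollectI exI[of _ A]) (use A in simp)
  then have "openin (sn_topology Vxx R) (sn_ball Vxx {rA} (J 0) 1)"
    using J0 by (intro openin_sn_ball) auto
  then have "openin tD {x \<in> D. J x \<in> sn_ball Vxx {rA} (J 0) 1}"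
    using J unfolding continuous_map_def by simp
  moreover have "0 \<in> {x \<in> D. J x \<in> sn_ball Vxx {rA} (J 0) 1}"
    using J0 A(1) unfolding sn_ball_def rA_def by (simp add: J0_eq)
  ultimately obtain F e where F: "finite F" "F \<subseteq> P" "e > 0"
    "sn_ball D F 0 e \<subseteq> {x \<in> D. J x \<in> sn_ball Vxx {rA} (J 0) 1}"
    using openin_sn_topologyD[OF sn_pseudometric_D] by meson
  have "cmod (\<Phi> y) < 1" if y: "y \<in> sn_ball D F 0 e" and \<Phi>: "\<Phi> \<in> A" for y \<Phi>
  proof -
    have yD: "y \<in> D" and "rA (J y - J 0) < 1" using F(4) y unfolding sn_ball_def by auto
    moreover have "(J y - J 0) \<Psi> = \<Psi> y" if "\<Psi> \<in> A" for \<Psi>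
      using that A(2) unfolding fun_diff_def J0_eq unfolding J_def by auto
    then have "(\<lambda>\<Psi>. cmod ((J y - J 0) \<Psi>)) ` A = (\<lambda>\<Psi>. cmod (\<Psi> y)) ` A"
      by (intro image_cong) simp_all
    ultimately have "Sup ((\<lambda>\<Psi>. cmod (\<Psi> y)) ` A) < 1" unfolding rA_def by simp
    moreover have "cmod (\<Phi> y) \<le> Sup ((\<lambda>\<Psi>. cmod (\<Psi> y)) ` A)"
      using \<Phi> bdd_above_strongly_bounded[OF A(3) yD] by (rule cSUP_upper)
    ultimately show ?thesis by linarith
  qed
  then show ?thesis using F(1-3) by blast
qed

end

section \<open>Biorthogonal sequences; (i) implies (ii) and (iii)\<close>

locale rigged_basis = rigged_hilbert_space sc ip D P
  for sc :: "complex \<Rightarrow> 'h::ab_group_add \<Rightarrow> 'h" and ip D P +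
  fixes \<xi> :: "nat \<Rightarrow> 'h"
  assumes basis: "topological_basis_sn sc D P \<xi>"
begin

lemma basis_in_D [simp]: "\<xi> n \<in> D"
  using basis unfolding topological_basis_sn_def by simp

lemma basis_expansion_unique:
  "f \<in> D \<Longrightarrow> \<exists>!c. limitin tD (\<lambda>N. \<Sum>n<N. sc (c n) (\<xi> n)) f sequentially"
  using basis unfolding topological_basis_sn_def by simp

lemma basis_coeff_limit:
  "f \<in> D \<Longrightarrow> limitin tD (\<lambda>N. \<Sum>n<N. sc (basis_coeff sc D P \<xi> n f) (\<xi> n)) f sequentially"
  unfolding basis_coeff_def using theI'[OF basis_expansion_unique] by simp

definition biorthogonal :: "(nat \<Rightarrow> 'h \<Rightarrow> complex) \<Rightarrow> bool" where
  "biorthogonal \<zeta> \<longleftrightarrow> (\<forall>n. \<zeta> n \<in> Dx) \<and> (\<forall>n k. \<zeta> n (\<xi> k) = (if n = k then 1 else 0))"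

text \<open>Condition (ii) of the theorem, without the uniqueness.\<close>
definition l2_coefficients :: "(nat \<Rightarrow> 'h \<Rightarrow> complex) \<Rightarrow> bool" where
  "l2_coefficients \<zeta> \<longleftrightarrow> (\<forall>n. \<zeta> n \<in> Dx) \<and> (\<forall>n k. \<zeta> n (\<xi> k) = (if n = k then 1 else 0))
     \<and> (\<forall>f\<in>D. summable (\<lambda>n. (cmod (\<zeta> n f))\<^sup>2))
     \<and> continuous_map tD euclidean (\<lambda>f. sqrt (\<Sum>n. (cmod (\<zeta> n f))\<^sup>2))"

definition biorthogonalizing_operator :: "('h \<Rightarrow> 'h \<Rightarrow> complex) \<Rightarrow> bool" where
  "biorthogonalizing_operator S \<longleftrightarrow> in_L_DDx sc D P S \<and> (\<forall>f\<in>D. Im (S f f) = 0 \<and> Re (S f f) \<ge> 0)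
     \<and> (\<forall>n k. S (\<xi> n) (\<xi> k) = (if n = k then 1 else 0))"

lemma biorthogonal_partial_sum:
  assumes bi: "biorthogonal \<zeta>" and "n < N"
  shows "\<zeta> n (\<Sum>k<N. sc (c k) (\<xi> k)) = cnj (c n)"
proof -
  have "\<zeta> n (\<Sum>k<N. sc (c k) (\<xi> k)) = (\<Sum>k<N. cnj (c k) * \<zeta> n (\<xi> k))"
    using bi unfolding biorthogonal_def by (simp add: conj_dual_sum)
  also have "\<dots> = (\<Sum>k<N. if k = n then cnj (c n) else 0)"
    using bi unfolding biorthogonal_def by (intro sum.cong) auto
  finally show ?thesis using \<open>n < N\<close> by simp
qed

lemma biorthogonal_expansion_coeff:
  assumes bi: "biorthogonal \<zeta>" and lim: "limitin tD (\<lambda>N. \<Sum>k<N. sc (c k) (\<xi> k)) f sequentially"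
  shows "\<zeta> n f = cnj (c n)"
proof -
  have "(\<lambda>N. \<zeta> n (\<Sum>k<N. sc (c k) (\<xi> k))) \<longlonglongrightarrow> \<zeta> n f"
    using continuous_map_limit[OF conj_dual_continuous lim] bi
    unfolding biorthogonal_def by (simp add: o_def)
  moreover have "(\<lambda>N. \<zeta> n (\<Sum>k<N. sc (c k) (\<xi> k))) \<longlonglongrightarrow> cnj (c n)"
    by (intro tendsto_eventually eventually_sequentiallyI[of "Suc n"])
      (simp add: biorthogonal_partial_sum[OF bi])
  ultimately show ?thesis by (rule LIMSEQ_unique)
qed

lemma biorthogonal_eq_cnj_basis_coeff:
  "biorthogonal \<zeta> \<Longrightarrow> f \<in> D \<Longrightarrow> \<zeta> n f = cnj (basis_coeff sc D P \<xi> n f)"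
  by (rule biorthogonal_expansion_coeff[OF _ basis_coeff_limit])

lemma biorthogonal_unique:
  assumes "biorthogonal \<zeta>" "biorthogonal \<zeta>'"
  shows "\<zeta> = \<zeta>'"
proof (intro ext)
  fix n f
  show "\<zeta> n f = \<zeta>' n f"
  proof (cases "f \<in> D")
    case True
    then show ?thesis using assms by (simp add: biorthogonal_eq_cnj_basis_coeff)
  next
    case False
    then show ?thesis using assms unfolding biorthogonal_def by (simp add: conj_dual_outside)
  qed
qed

lemma l2_coefficients_unique: "l2_coefficients \<zeta> \<Longrightarrow> l2_coefficients \<zeta>' \<Longrightarrow> \<zeta> = \<zeta>'"
  using biorthogonal_unique unfolding l2_coefficients_def biorthogonal_def by blast

lemma schauder_basis_if_biorthogonal:
  assumes bi: "biorthogonal \<zeta>"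
  shows "schauder_basis_sn sc D P \<xi>"
  unfolding schauder_basis_sn_def
proof (intro conjI allI basis)
  fix n
  have "continuous_map tD euclidean (\<lambda>f. cnj (\<zeta> n f))"
    using conj_dual_continuous bi unfolding biorthogonal_def
    by (simp add: continuous_map_atin tendsto_cnj)
  then show "continuous_map tD euclidean (basis_coeff sc D P \<xi> n)"
    by (rule continuous_map_eq) (simp add: biorthogonal_eq_cnj_basis_coeff[OF bi])
qed

lemma riesz_like_l2_coefficients:
  assumes T: "in_C_DH sc ip D P T" and onb: "orthonormal_basis sc ip (\<lambda>n. T (\<xi> n))"
  shows "l2_coefficients (\<lambda>n f. if f \<in> D then ip (T (\<xi> n)) (T f) else 0)"
proof -
  define \<zeta> where "\<zeta> = (\<lambda>n f. if f \<in> D then ip (T (\<xi> n)) (T f) else 0)"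
  have on: "orthonormal_seq (\<lambda>n. T (\<xi> n))"
    using onb unfolding orthonormal_basis_def orthonormal_seq_def by blast
  have bi: "biorthogonal \<zeta>"
    unfolding biorthogonal_def \<zeta>_def using ip_C_DH_in_conj_dual[OF T] on
    unfolding orthonormal_seq_def by simp
  have summ: "\<forall>f\<in>D. summable (\<lambda>n. (cmod (\<zeta> n f))\<^sup>2)"
    unfolding \<zeta>_def using Bessel_summable(1)[OF on] by simp
  have "continuous_map tD euclidean (\<lambda>f. sqrt (\<Sum>n. (cmod (\<zeta> n f))\<^sup>2))"
  proof (rule continuous_map_hnorm_Lipschitz[OF C_DH_continuous[OF T], where C=1])
    fix f g assume f: "f \<in> D" and g: "g \<in> D"
    have "\<bar>sqrt (\<Sum>n. (cmod (\<zeta> n g))\<^sup>2) - sqrt (\<Sum>n. (cmod (\<zeta> n f))\<^sup>2)\<bar>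
        \<le> sqrt (\<Sum>n. (cmod (\<zeta> n g - \<zeta> n f))\<^sup>2)"
      using summ f g by (intro l2_reverse_triangle) auto
    also have "\<dots> = sqrt (\<Sum>n. (cmod (ip (T (\<xi> n)) (T g - T f)))\<^sup>2)"
      using f g unfolding \<zeta>_def by (simp add: ip_diff_right)
    also have "\<dots> \<le> hnorm ip (T g - T f)" by (rule Bessel_summable(2)[OF on])
    finally show "dist (sqrt (\<Sum>n. (cmod (\<zeta> n g))\<^sup>2)) (sqrt (\<Sum>n. (cmod (\<zeta> n f))\<^sup>2))
        \<le> 1 * hnorm ip (T g - T f)" by (simp add: dist_real_def)
  qed
  then show ?thesis using bi summ unfolding l2_coefficients_def biorthogonal_def \<zeta>_def by blast
qed

lemma riesz_like_biorthogonalizing_operator: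
  assumes T: "in_C_DH sc ip D P T" and onb: "orthonormal_basis sc ip (\<lambda>n. T (\<xi> n))"
  shows "biorthogonalizing_operator (\<lambda>f g. if g \<in> D then ip (T f) (T g) else 0)"
proof -
  define S where "S = (\<lambda>f g. if g \<in> D then ip (T f) (T g) else 0)"
  have SDx: "S f \<in> Dx" if "f \<in> D" for f
    unfolding S_def by (rule ip_C_DH_in_conj_dual[OF T])
  have "continuous_map tD (sn_topology Dx Qx) S"
  proof (rule continuous_map_into_strong_dual[OF SDx C_DH_continuous[OF T]])
    fix q f \<Psi> assume "q \<in> Qx" "f \<in> D" "\<Psi> \<in> Dx"
    then show "\<exists>M\<ge>0. \<forall>g\<in>D. q (S g - \<Psi>) \<le> q (S f - \<Psi>) + M * hnorm ip (T g - T f)"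
      unfolding S_def by (rule strong_seminorm_ip_C_DH_bound[OF T])
  qed
  moreover have "S (x + y) = S x + S y" if "x \<in> D" "y \<in> D" for x y
    unfolding S_def using that by (auto simp: C_DH_add[OF T] ip_add_left)
  moreover have "S (sc c x) = fsc c (S x)" if "x \<in> D" for c x
    unfolding S_def fsc_def using that by (auto simp: C_DH_sc[OF T] ip_sc_left)
  ultimately have "in_L_DDx sc D P S"
    unfolding in_L_DDx_def using SDx by blast
  moreover have "\<forall>f\<in>D. Im (S f f) = 0 \<and> Re (S f f) \<ge> 0"
    unfolding S_def using ip_self_Im ip_self_Re by simp
  moreover have "\<forall>n k. S (\<xi> n) (\<xi> k) = (if n = k then 1 else 0)"
    unfolding S_def using onb unfolding orthonormal_basis_def by simp
  ultimately show ?thesis unfolding biorthogonalizing_operator_def S_def by blast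
qed

end

section \<open>(ii) implies (i): Gram--Schmidt and the Riesz operator\<close>

locale l2_biorthogonal_system = rigged_basis sc ip D P \<xi>
  for sc :: "complex \<Rightarrow> 'h::ab_group_add \<Rightarrow> 'h" and ip D P \<xi> +
  fixes \<zeta> :: "nat \<Rightarrow> 'h \<Rightarrow> complex"
  assumes l2: "l2_coefficients \<zeta>"
begin

lemma biorthogonal_coeffs: "biorthogonal \<zeta>"
  and coeff_in_conj_dual: "\<zeta> n \<in> Dx"
  and coeff_basis: "\<zeta> n (\<xi> k) = (if n = k then 1 else 0)"
  and coeff_summable: "f \<in> D \<Longrightarrow> summable (\<lambda>n. (cmod (\<zeta> n f))\<^sup>2)"
  using l2 unfolding l2_coefficients_def biorthogonal_def by blast+

definition coeff_norm :: "'h \<Rightarrow> real" where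
  "coeff_norm f = sqrt (\<Sum>n. (cmod (\<zeta> n f))\<^sup>2)"

lemma continuous_coeff_norm: "continuous_map tD euclidean coeff_norm"
  using l2 unfolding l2_coefficients_def coeff_norm_def by blast

text \<open>Finite combinations of \<open>\<xi>\<^sub>0, \<dots>, \<xi>\<^sub>m\<^sub>-\<^sub>1\<close> lie in \<open>tail_null m\<close>, while \<open>\<xi>\<^sub>m\<close> does not; this is
  the linear independence needed for Gram--Schmidt.\<close>
definition tail_null :: "nat \<Rightarrow> 'h set" where
  "tail_null m = {x \<in> D. \<forall>n\<ge>m. \<zeta> n x = 0}"

lemma basis_in_tail_null: "j < m \<Longrightarrow> \<xi> j \<in> tail_null m"
  unfolding tail_null_def by (simp add: coeff_basis)

lemma basis_notin_tail_null: "\<xi> m \<notin> tail_null m"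
  unfolding tail_null_def by (simp add: coeff_basis)

lemma tail_null_mono: "m \<le> m' \<Longrightarrow> x \<in> tail_null m \<Longrightarrow> x \<in> tail_null m'"
  unfolding tail_null_def by auto

lemma tail_null_lincomb:
  "(\<And>i. i \<in> A \<Longrightarrow> x i \<in> tail_null m) \<Longrightarrow> (\<Sum>i\<in>A. sc (c i) (x i)) \<in> tail_null m"
  unfolding tail_null_def
  by (auto simp: coeff_in_conj_dual conj_dual_sum sc_in_D intro!: sum_in_D sum.neutral)

lemma tail_null_diff: "x \<in> tail_null m \<Longrightarrow> y \<in> tail_null m \<Longrightarrow> x - y \<in> tail_null m"
  unfolding tail_null_def by (auto simp: coeff_in_conj_dual conj_dual_diff diff_in_D)

fun gs_vec :: "nat \<Rightarrow> 'h" where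
  "gs_vec n = (let u = \<xi> n - (\<Sum>k<n. sc (ip (\<xi> n) (gs_vec k)) (gs_vec k))
                in sc (complex_of_real (1 / hnorm ip u)) u)"

declare gs_vec.simps [simp del]

definition gs_residual :: "nat \<Rightarrow> 'h" where
  "gs_residual n = \<xi> n - (\<Sum>k<n. sc (ip (\<xi> n) (gs_vec k)) (gs_vec k))"

lemma gs_vec_eq: "gs_vec n = sc (complex_of_real (1 / hnorm ip (gs_residual n))) (gs_residual n)"
  by (subst gs_vec.simps) (simp add: gs_residual_def Let_def)

lemma gs_residual_orthogonal:
  assumes orth: "\<forall>i<n. \<forall>j<n. ip (gs_vec i) (gs_vec j) = (if i = j then 1 else 0)" and "j < n"
  shows "ip (gs_residual n) (gs_vec j) = 0"
proof -
  have "(\<Sum>k<n. ip (\<xi> n) (gs_vec k) * ip (gs_vec k) (gs_vec j))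
      = (\<Sum>k<n. if k = j then ip (\<xi> n) (gs_vec j) else 0)"
    using orth \<open>j < n\<close> by (intro sum.cong) auto
  then show ?thesis
    using \<open>j < n\<close> unfolding gs_residual_def by (simp add: ip_diff_left ip_sum_left ip_sc_left)
qed

lemma gs_residual_nonzero:
  assumes "\<forall>k<n. gs_vec k \<in> tail_null n"
  shows "gs_residual n \<noteq> 0"
proof
  assume "gs_residual n = 0"
  then have "\<xi> n = (\<Sum>k<n. sc (ip (\<xi> n) (gs_vec k)) (gs_vec k))"
    unfolding gs_residual_def by simp
  also have "\<dots> \<in> tail_null n" using assms by (intro tail_null_lincomb) auto
  finally show False using basis_notin_tail_null by simp
qed

lemma gs_vec_props:
  "(\<forall>i<n. \<forall>j<n. ip (gs_vec i) (gs_vec j) = (if i = j then 1 else 0))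
   \<and> (\<forall>i<n. gs_vec i \<in> tail_null (Suc i))"
proof (induction n)
  case (Suc n)
  then have orth: "\<forall>i<n. \<forall>j<n. ip (gs_vec i) (gs_vec j) = (if i = j then 1 else 0)"
    and tail: "\<forall>i<n. gs_vec i \<in> tail_null (Suc i)" by auto
  have tail_n: "\<forall>k<n. gs_vec k \<in> tail_null n"
    using tail tail_null_mono by (meson Suc_leI)
  have "hnorm ip (gs_residual n) > 0"
    using gs_residual_nonzero[OF tail_n] by (rule hnorm_pos)
  then have unit: "ip (gs_vec n) (gs_vec n) = 1"
    unfolding gs_vec_eq ip_sc_left ip_sc_right ip_self_hnorm[of "gs_residual n"]
    by (simp add: power2_eq_square)
  have "ip (gs_vec n) (gs_vec j) = 0" if "j < n" for j
    unfolding gs_vec_eq[of n] by (simp add: ip_sc_left gs_residual_orthogonal[OF orth that])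
  then have orth_new: "ip (gs_vec n) (gs_vec j) = 0" "ip (gs_vec j) (gs_vec n) = 0" if "j < n" for j
    using that ip_sym[of "gs_vec n" "gs_vec j"] by auto
  have "(\<Sum>k<n. sc (ip (\<xi> n) (gs_vec k)) (gs_vec k)) \<in> tail_null n"
    using tail_n by (intro tail_null_lincomb) auto
  then have "gs_residual n \<in> tail_null (Suc n)"
    unfolding gs_residual_def
    by (intro tail_null_diff basis_in_tail_null) (auto intro: tail_null_mono[rotated])
  then have "gs_vec n \<in> tail_null (Suc n)"
    unfolding gs_vec_eq[of n] using tail_null_lincomb[of "{0}" "\<lambda>_. gs_residual n"] by simp
  then show ?case
    using orth tail unit orth_new by (auto simp: less_Suc_eq)
qed simp

lemma gs_orthonormal: "orthonormal_seq gs_vec"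
  unfolding orthonormal_seq_def
proof (intro allI)
  fix n m
  show "ip (gs_vec n) (gs_vec m) = (if n = m then 1 else 0)"
    using gs_vec_props[of "Suc (max n m)"] by simp
qed

lemma gs_residual_hnorm_pos: "hnorm ip (gs_residual n) > 0"
  using gs_vec_props[of n] tail_null_mono gs_residual_nonzero hnorm_pos by (meson Suc_leI)

lemma basis_eq_gs_lincomb:
  "\<xi> n = sc (complex_of_real (hnorm ip (gs_residual n))) (gs_vec n)
          + (\<Sum>k<n. sc (ip (\<xi> n) (gs_vec k)) (gs_vec k))"
  using gs_residual_hnorm_pos[of n] unfolding gs_vec_eq[of n] gs_residual_def
  by (simp add: sc_assoc)

definition gs_span :: "'h set" where
  "gs_span = {(\<Sum>i\<in>F. sc (c i) (gs_vec i)) | F c. finite F}"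

lemma gs_span_add:
  assumes "x \<in> gs_span" "y \<in> gs_span"
  shows "x + y \<in> gs_span"
proof -
  obtain F1 c1 F2 c2 where F: "finite F1" "finite F2"
    and x: "x = (\<Sum>i\<in>F1. sc (c1 i) (gs_vec i))" and y: "y = (\<Sum>i\<in>F2. sc (c2 i) (gs_vec i))"
    using assms unfolding gs_span_def by blast
  define c where "c i = (if i \<in> F1 then c1 i else 0) + (if i \<in> F2 then c2 i else 0)" for i
  have "x = (\<Sum>i\<in>F1 \<union> F2. sc (if i \<in> F1 then c1 i else 0) (gs_vec i))"
    unfolding x using F by (intro sum.mono_neutral_cong_left) auto
  moreover have "y = (\<Sum>i\<in>F1 \<union> F2. sc (if i \<in> F2 then c2 i else 0) (gs_vec i))"
    unfolding y using F by (intro sum.mono_neutral_cong_left) auto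
  ultimately have "x + y = (\<Sum>i\<in>F1 \<union> F2. sc (c i) (gs_vec i))"
    unfolding c_def by (simp add: sc_add_left sum.distrib)
  then show ?thesis using F unfolding gs_span_def by blast
qed

lemma gs_span_sc:
  assumes "x \<in> gs_span"
  shows "sc a x \<in> gs_span"
proof -
  obtain F c where "finite F" "x = (\<Sum>i\<in>F. sc (c i) (gs_vec i))"
    using assms unfolding gs_span_def by blast
  then have "finite F \<and> sc a x = (\<Sum>i\<in>F. sc (a * c i) (gs_vec i))"
    by (simp add: sc_sum_right sc_assoc)
  then show ?thesis
    unfolding gs_span_def by (intro CollectI exI[of _ F] exI[of _ "\<lambda>i. a * c i"]) simp
qed

lemma gs_span_zero: "0 \<in> gs_span"
  unfolding gs_span_def by (intro CollectI exI[of _ "{}"]) simp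

lemma gs_span_sum: "(\<And>i. i \<in> A \<Longrightarrow> x i \<in> gs_span) \<Longrightarrow> sum x A \<in> gs_span"
  by (induction A rule: infinite_finite_induct) (simp_all add: gs_span_zero gs_span_add)

lemma basis_in_gs_span: "\<xi> n \<in> gs_span"
proof -
  have "sc a (gs_vec k) \<in> gs_span" for a k
    unfolding gs_span_def by (intro CollectI exI[of _ "{k}"] exI[of _ "\<lambda>_. a"]) simp
  then show ?thesis
    by (subst basis_eq_gs_lincomb) (intro gs_span_add gs_span_sum)
qed

lemma gs_span_dense: "(htop ip) closure_of gs_span = UNIV"
proof -
  have "x \<in> (htop ip) closure_of gs_span" for x
    unfolding in_closure_of
  proof (intro conjI allI impI)
    fix U assume U: "x \<in> U \<and> openin (htop ip) U"
    have "x \<in> (htop ip) closure_of D" using dense_D by simp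
    then obtain y where y: "y \<in> D" "y \<in> U"
      using U unfolding in_closure_of by blast
    obtain F r where F: "finite F" "F \<subseteq> {hnorm ip}" "r > 0" "sn_ball UNIV F y r \<subseteq> U"
      using openin_sn_topologyD[OF sn_pseudometric_hnorm] U y(2) unfolding htop_def by meson
    define s where "s N = (\<Sum>n<N. sc (basis_coeff sc D P \<xi> n y) (\<xi> n))" for N
    have "hlim s y" unfolding s_def by (rule limitin_tD_imp_hlim[OF basis_coeff_limit[OF y(1)]])
    then obtain N where "norm (hnorm ip (s N - y) - 0) < r"
      unfolding hlim_def using LIMSEQ_D \<open>r > 0\<close> by blast
    then have "hnorm ip (s N - y) < r" by (simp add: hnorm_nonneg)
    then have "s N \<in> U" using F(2,4) unfolding sn_ball_def by auto
    moreover have "s N \<in> gs_span"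
      unfolding s_def by (intro gs_span_sum gs_span_sc basis_in_gs_span)
    ultimately show "\<exists>z. z \<in> gs_span \<and> z \<in> U" by blast
  qed simp
  then show ?thesis by auto
qed

definition gs_synthesis :: "'h \<Rightarrow> nat \<Rightarrow> 'h" where
  "gs_synthesis f N = (\<Sum>n<N. sc (cnj (\<zeta> n f)) (gs_vec n))"

definition riesz_op :: "'h \<Rightarrow> 'h" where
  "riesz_op f = (SOME y. hlim (gs_synthesis f) y)"

lemma hnorm_gs_synthesis_diff:
  assumes "m \<le> n"
  shows "(hnorm ip (gs_synthesis f n - gs_synthesis f m))\<^sup>2 = (\<Sum>i\<in>{m..<n}. (cmod (\<zeta> i f))\<^sup>2)"
proof -
  have "gs_synthesis f n - gs_synthesis f m = (\<Sum>i\<in>{m..<n}. sc (cnj (\<zeta> i f)) (gs_vec i))"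
    unfolding gs_synthesis_def atLeast0LessThan[symmetric] using sum_diff_nat_ivl[of 0 m n] assms by simp
  then show ?thesis using hnorm_sum_orthonormal[OF gs_orthonormal] by simp
qed

lemma hlim_gs_synthesis:
  assumes f: "f \<in> D"
  shows "hlim (gs_synthesis f) (riesz_op f)"
  unfolding riesz_op_def
proof (rule someI_ex, rule hlim_Cauchy)
  fix e :: real assume "e > 0"
  then have "e\<^sup>2 > 0" by simp
  then obtain N where N: "\<forall>m\<ge>N. \<forall>n. norm (\<Sum>i\<in>{m..<n}. (cmod (\<zeta> i f))\<^sup>2) < e\<^sup>2"
    using coeff_summable[OF f] unfolding summable_Cauchy by blast
  have less: "hnorm ip (gs_synthesis f n - gs_synthesis f m) < e" if "N \<le> m" "m \<le> n" for m n
  proof (rule power2_less_imp_less)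
    show "(hnorm ip (gs_synthesis f n - gs_synthesis f m))\<^sup>2 < e\<^sup>2"
      using hnorm_gs_synthesis_diff[OF that(2)] N that(1) by (simp add: sum_nonneg)
  qed (use \<open>e > 0\<close> in simp)
  show "\<exists>N. \<forall>m\<ge>N. \<forall>n\<ge>N. hnorm ip (gs_synthesis f m - gs_synthesis f n) < e"
  proof (intro exI allI impI)
    fix m n assume "N \<le> m" "N \<le> n"
    then show "hnorm ip (gs_synthesis f m - gs_synthesis f n) < e"
      using less[of m n] less[of n m] hnorm_minus_commute[of "gs_synthesis f m"]
      by (cases "m \<le> n") auto
  qed
qed

lemma hnorm_riesz_op:
  assumes f: "f \<in> D"
  shows "hnorm ip (riesz_op f) = coeff_norm f"
proof -
  have "sqrt (\<Sum>n<N. (cmod (\<zeta> n f))\<^sup>2) = hnorm ip (gs_synthesis f N)" for N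
    using hnorm_sum_orthonormal[OF gs_orthonormal, of "{..<N}" "\<lambda>n. cnj (\<zeta> n f)"] hnorm_nonneg
    unfolding gs_synthesis_def by (simp add: real_sqrt_unique)
  moreover have "(\<lambda>N. sqrt (\<Sum>n<N. (cmod (\<zeta> n f))\<^sup>2)) \<longlonglongrightarrow> coeff_norm f"
    unfolding coeff_norm_def by (intro tendsto_real_sqrt summable_LIMSEQ coeff_summable f)
  ultimately show ?thesis
    using hlim_hnorm[OF hlim_gs_synthesis[OF f]] LIMSEQ_unique by simp
qed

lemma riesz_op_add:
  assumes f: "f \<in> D" and g: "g \<in> D"
  shows "riesz_op (f + g) = riesz_op f + riesz_op g"
proof -
  have "gs_synthesis (f + g) = (\<lambda>N. gs_synthesis f N + gs_synthesis g N)"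
    unfolding gs_synthesis_def using f g
    by (auto simp: coeff_in_conj_dual conj_dual_add sc_add_left sum.distrib)
  then have "hlim (gs_synthesis (f + g)) (riesz_op f + riesz_op g)"
    using hlim_add[OF hlim_gs_synthesis[OF f] hlim_gs_synthesis[OF g]] by simp
  then show ?thesis by (rule hlim_unique[OF hlim_gs_synthesis[OF add_in_D[OF f g]]])
qed

lemma riesz_op_sc:
  assumes f: "f \<in> D"
  shows "riesz_op (sc c f) = sc c (riesz_op f)"
proof -
  have "gs_synthesis (sc c f) = (\<lambda>N. sc c (gs_synthesis f N))"
    unfolding gs_synthesis_def using f
    by (auto simp: coeff_in_conj_dual conj_dual_sc sc_sum_right sc_assoc)
  then have "hlim (gs_synthesis (sc c f)) (sc c (riesz_op f))"
    using hlim_sc[OF hlim_gs_synthesis[OF f]] by simp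
  then show ?thesis by (rule hlim_unique[OF hlim_gs_synthesis[OF sc_in_D[OF f]]])
qed

lemma riesz_op_diff: "f \<in> D \<Longrightarrow> g \<in> D \<Longrightarrow> riesz_op g - riesz_op f = riesz_op (g - f)"
  using riesz_op_add[of "g - f" f] diff_in_D by simp

lemma riesz_op_basis: "riesz_op (\<xi> k) = gs_vec k"
proof -
  have "gs_synthesis (\<xi> k) N = gs_vec k" if "Suc k \<le> N" for N
  proof -
    have "gs_synthesis (\<xi> k) N = (\<Sum>n<N. if n = k then gs_vec k else 0)"
      unfolding gs_synthesis_def by (intro sum.cong) (auto simp: coeff_basis)
    then show ?thesis using that by simp
  qed
  then have "hlim (gs_synthesis (\<xi> k)) (gs_vec k)"
    by (intro hlim_eventually eventually_sequentiallyI)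
  then show ?thesis using hlim_gs_synthesis[OF basis_in_D] hlim_unique by blast
qed

lemma riesz_op_C_DH: "in_C_DH sc ip D P riesz_op"
  unfolding in_C_DH_def
proof (intro conjI ballI allI riesz_op_add riesz_op_sc)
  have "coeff_norm 0 = 0"
    unfolding coeff_norm_def using conj_dual_zero[OF coeff_in_conj_dual] by simp
  then show "continuous_map tD (htop ip) riesz_op"
    by (rule continuous_map_htopI[OF continuous_coeff_norm])
      (simp add: riesz_op_diff hnorm_riesz_op diff_in_D)
qed

lemma riesz_op_inj: "inj_on riesz_op D"
proof (rule inj_onI)
  fix f g assume f: "f \<in> D" and g: "g \<in> D" and eq: "riesz_op f = riesz_op g"
  have h: "f - g \<in> D" using f g by (rule diff_in_D)
  have "coeff_norm (f - g) = 0"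
    using hnorm_riesz_op[OF h] riesz_op_diff[OF g f] eq by simp
  then have "\<forall>n. (cmod (\<zeta> n (f - g)))\<^sup>2 = 0"
    unfolding coeff_norm_def using suminf_eq_zero_iff[OF coeff_summable[OF h]] by simp
  then have "basis_coeff sc D P \<xi> n (f - g) = 0" for n
    using biorthogonal_eq_cnj_basis_coeff[OF biorthogonal_coeffs h, of n] by simp
  then have "limitin tD (\<lambda>N. 0) (f - g) sequentially"
    using basis_coeff_limit[OF h] by simp
  moreover have "limitin tD (\<lambda>N. 0) 0 sequentially" by simp
  ultimately have "f - g = 0" by (rule limitin_tD_unique)
  then show "f = g" by simp
qed

lemma riesz_like: "riesz_like_basis sc ip D P \<xi>"
  unfolding riesz_like_basis_def
proof (intro conjI exI)
  show "schauder_basis_sn sc D P \<xi>" by (rule schauder_basis_if_biorthogonal[OF biorthogonal_coeffs])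
  show "orthonormal_basis sc ip (\<lambda>n. riesz_op (\<xi> n))"
    using gs_orthonormal gs_span_dense
    unfolding orthonormal_basis_def riesz_op_basis orthonormal_seq_def gs_span_def by simp
qed (rule riesz_op_C_DH, rule riesz_op_inj)

end

section \<open>(iii) implies (ii)\<close>

locale positive_biorthogonal_system = rigged_basis sc ip D P \<xi>
  for sc :: "complex \<Rightarrow> 'h::ab_group_add \<Rightarrow> 'h" and ip D P \<xi> +
  fixes S :: "'h \<Rightarrow> 'h \<Rightarrow> complex"
  assumes S: "biorthogonalizing_operator S"
    and reflexive: "sn_reflexive sc D P"
begin

lemma S_in_conj_dual: "f \<in> D \<Longrightarrow> S f \<in> Dx"
  and S_add: "x \<in> D \<Longrightarrow> y \<in> D \<Longrightarrow> S (x + y) = S x + S y"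
  and S_sc: "x \<in> D \<Longrightarrow> S (sc c x) = fsc c (S x)"
  and S_continuous: "continuous_map tD (sn_topology Dx Qx) S"
  and S_positive: "f \<in> D \<Longrightarrow> Im (S f f) = 0 \<and> Re (S f f) \<ge> 0"
  and S_basis: "S (\<xi> n) (\<xi> k) = (if n = k then 1 else 0)"
  using S unfolding biorthogonalizing_operator_def in_L_DDx_def by metis+

lemma S_add_left: "x \<in> D \<Longrightarrow> y \<in> D \<Longrightarrow> S (x + y) g = S x g + S y g"
  by (simp add: S_add)

lemma S_sc_left: "x \<in> D \<Longrightarrow> S (sc c x) g = c * S x g"
  by (simp add: S_sc fsc_def)

lemma S_zero: "S 0 = 0"
  using S_add[of 0 0] by simp

lemma S_diff_left: "x \<in> D \<Longrightarrow> y \<in> D \<Longrightarrow> S (x - y) g = S x g - S y g"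
  using S_add_left[of "x - y" y g] diff_in_D by (simp add: eq_diff_eq)

lemma S_lincomb_left:
  "(\<And>i. i \<in> A \<Longrightarrow> x i \<in> D) \<Longrightarrow> S (\<Sum>i\<in>A. sc (c i) (x i)) g = (\<Sum>i\<in>A. c i * S (x i) g)"
proof (induction A rule: infinite_finite_induct)
  case (insert a A)
  then show ?case by (simp add: S_add_left S_sc_left sc_in_D sum_in_D)
qed (simp_all add: S_zero)

text \<open>Polarization.\<close>
lemma S_hermitian:
  assumes f: "f \<in> D" and g: "g \<in> D"
  shows "S g f = cnj (S f g)"
proof -
  have "Im (S (f + g) (f + g)) = 0" "Im (S (f + sc \<i> g) (f + sc \<i> g)) = 0"
    using S_positive add_in_D[OF f] g sc_in_D by blast+
  moreover have "S (f + g) (f + g) = S f f + S f g + S g f + S g g"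
    using f g by (simp add: S_add_left S_in_conj_dual conj_dual_add)
  moreover have "S (f + sc \<i> g) (f + sc \<i> g) = S f f - \<i> * S f g + \<i> * S g f + S g g"
    using f g sc_in_D by (simp add: S_add_left S_sc_left S_in_conj_dual conj_dual_add conj_dual_sc)
  moreover have "Im (S f f) = 0" "Im (S g g) = 0" using S_positive f g by auto
  ultimately have "Im (S f g + S g f) = 0" "Re (S g f - S f g) = 0" by simp_all
  then show ?thesis by (simp add: complex_eq_iff)
qed

lemma S_biorthogonal: "biorthogonal (\<lambda>n. S (\<xi> n))"
  unfolding biorthogonal_def using S_in_conj_dual S_basis by simp

lemma S_Bessel:
  assumes f: "f \<in> D"
  shows "(\<Sum>n<N. (cmod (S (\<xi> n) f))\<^sup>2) \<le> Re (S f f)"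
proof -
  define a where "a n = S f (\<xi> n)" for n
  define w where "w = (\<Sum>n<N. sc (a n) (\<xi> n))"
  have wD: "w \<in> D" unfolding w_def by (intro sum_in_D sc_in_D basis_in_D)
  have norm_sum: "(\<Sum>n<N. cnj (a n) * a n) = complex_of_real (\<Sum>n<N. (cmod (a n))\<^sup>2)"
    unfolding of_real_sum by (metis complex_norm_square mult.commute)
  have Sw: "S w g = (\<Sum>n<N. a n * S (\<xi> n) g)" for g
    unfolding w_def by (rule S_lincomb_left) simp
  have "S f w = (\<Sum>n<N. cnj (a n) * S f (\<xi> n))"
    unfolding w_def by (rule conj_dual_sum[OF S_in_conj_dual[OF f]]) simp
  then have "S f w = (\<Sum>n<N. cnj (a n) * a n)" by (simp add: a_def)
  moreover have "S w f = (\<Sum>n<N. cnj (a n) * a n)"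
    unfolding Sw using f by (simp add: S_hermitian[of f] a_def mult.commute)
  moreover have "S w w = (\<Sum>n<N. cnj (a n) * a n)"
  proof -
    have "S (\<xi> n) w = cnj (a n)" if "n < N" for n
      unfolding w_def using biorthogonal_partial_sum[OF S_biorthogonal that] by simp
    then show ?thesis unfolding Sw[of w] by (auto simp: mult.commute intro: sum.cong)
  qed
  ultimately have "S (f - w) (f - w) = S f f - complex_of_real (\<Sum>n<N. (cmod (a n))\<^sup>2)"
    using f wD norm_sum by (simp add: S_diff_left S_in_conj_dual conj_dual_diff diff_in_D)
  moreover have "Re (S (f - w) (f - w)) \<ge> 0" using S_positive diff_in_D[OF f wD] by blast
  moreover have "cmod (S (\<xi> n) f) = cmod (a n)" for n
    using S_hermitian[OF basis_in_D f] unfolding a_def by simp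
  ultimately show ?thesis by simp
qed

lemma S_coeff_summable: "f \<in> D \<Longrightarrow> summable (\<lambda>n. (cmod (S (\<xi> n) f))\<^sup>2)"
  by (rule summableI_nonneg_bounded[OF _ S_Bessel]) simp_all

text \<open>Continuity of \<open>S\<close> at \<open>0\<close> for the strong seminorm of \<open>B\<close> bounds \<open>|\<langle>S v, w\<rangle>|\<close> by finitely
  many seminorms of \<open>v\<close>, uniformly in \<open>w \<in> B\<close>.\<close>
lemma S_bounded_on_bounded:
  assumes B: "B \<subseteq> D" "sn_bounded P B"
  shows "\<exists>K. \<forall>v\<in>B. \<forall>w\<in>B. cmod (S v w) \<le> K"
proof (cases "B = {}")
  case False
  define qB where "qB = (\<lambda>\<Phi>::'h \<Rightarrow> complex. Sup ((\<lambda>v. cmod (\<Phi> v)) ` B))"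
  have "qB \<in> Qx" unfolding qB_def using False B by (rule strong_seminorm_of_bounded)
  then have "openin (sn_topology Dx Qx) (sn_ball Dx {qB} (S 0) 1)"
    using S_in_conj_dual[OF zero_in_D] by (intro openin_sn_ball) auto
  then have "openin tD {x \<in> D. S x \<in> sn_ball Dx {qB} (S 0) 1}"
    using S_continuous unfolding continuous_map_def by simp
  moreover have "0 \<in> {x \<in> D. S x \<in> sn_ball Dx {qB} (S 0) 1}"
    using S_in_conj_dual[OF zero_in_D] False unfolding sn_ball_def qB_def by (simp add: S_zero)
  ultimately obtain F e where F: "finite F" "F \<subseteq> P" "e > 0"
    "sn_ball D F 0 e \<subseteq> {x \<in> D. S x \<in> sn_ball Dx {qB} (S 0) 1}"
    using openin_sn_topologyD[OF sn_pseudometric_D] by meson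
  have dom: "cmod (S v w) \<le> (2 / e) * (\<Sum>p\<in>F. p v)" if w: "w \<in> B" and v: "v \<in> D" for v w
  proof (rule homogeneous_le_sum_seminorms[OF _ F(1-3) _ v])
    fix y assume y: "y \<in> sn_ball D F 0 e"
    then have yD: "y \<in> D" and "qB (S y) < 1"
      using F(4) unfolding sn_ball_def by (auto simp: S_zero)
    moreover have "cmod (S y w) \<le> qB (S y)"
      unfolding qB_def using w conj_dual_bounded_on_bounded[OF S_in_conj_dual[OF yD] B]
      by (rule cSUP_upper)
    ultimately show "cmod (S y w) \<le> 1" by simp
  qed (simp add: S_sc_left norm_mult)
  obtain K where K: "\<forall>v\<in>B. (2 / e) * (\<Sum>p\<in>F. p v) \<le> K"
    using dominated_bdd_on_bounded[OF B F(1,2), of "2 / e" "\<lambda>v. (2 / e) * (\<Sum>p\<in>F. p v)"] F(3)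
    by auto
  have "cmod (S v w) \<le> K" if "v \<in> B" "w \<in> B" for v w
    using dom[OF that(2)] K that(1) B(1) by (meson order_trans subsetD)
  then show ?thesis by blast
qed simp

text \<open>Finite combinations of the \<open>S \<xi>\<^sub>n\<close> with coefficient vectors in the closed unit ball of
  \<open>\<ell>\<^sup>2\<close>; their values at \<open>f\<close> recover the partial \<open>\<ell>\<^sup>2\<close>-norms of \<open>(\<langle>S \<xi>\<^sub>n, f\<rangle>)\<^sub>n\<close>.\<close>
definition unit_lincombs :: "('h \<Rightarrow> complex) set" where
  "unit_lincombs = {(\<lambda>f. \<Sum>n<N. a n * S (\<xi> n) f) | a N. (\<Sum>n<N. (cmod (a n))\<^sup>2) \<le> 1}"

lemma unit_lincombs_subset: "unit_lincombs \<subseteq> Dx"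
proof
  fix \<Phi> assume "\<Phi> \<in> unit_lincombs"
  then obtain a N where "\<Phi> = (\<lambda>f. \<Sum>n<N. a n * S (\<xi> n) f)"
    unfolding unit_lincombs_def by blast
  then show "\<Phi> \<in> Dx"
    using lincomb_in_conj_dual[of "\<lambda>n. S (\<xi> n)" "{..<N}" a] S_in_conj_dual by simp
qed

lemma zero_in_unit_lincombs: "(\<lambda>f. 0) \<in> unit_lincombs"
  unfolding unit_lincombs_def by (intro CollectI exI[of _ "\<lambda>_. 0"] exI[of _ 0]) simp

lemma cmod_unit_lincomb_le:
  assumes \<Phi>: "\<Phi> \<in> unit_lincombs" and v: "v \<in> D"
  shows "cmod (\<Phi> v) \<le> sqrt (Re (S v v))"
proof -
  obtain a N where \<Phi>_eq: "\<Phi> = (\<lambda>f. \<Sum>n<N. a n * S (\<xi> n) f)" and a: "(\<Sum>n<N. (cmod (a n))\<^sup>2) \<le> 1"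
    using \<Phi> unfolding unit_lincombs_def by blast
  have "cmod (\<Phi> v) \<le> (\<Sum>n<N. \<bar>cmod (a n)\<bar> * \<bar>cmod (S (\<xi> n) v)\<bar>)"
    unfolding \<Phi>_eq by (rule order_trans[OF norm_sum]) (simp add: norm_mult)
  also have "\<dots> \<le> L2_set (\<lambda>n. cmod (a n)) {..<N} * L2_set (\<lambda>n. cmod (S (\<xi> n) v)) {..<N}"
    by (rule L2_set_mult_ineq)
  also have "\<dots> \<le> 1 * sqrt (Re (S v v))"
    using a S_Bessel[OF v] unfolding L2_set_def
    by (intro mult_mono real_sqrt_le_mono) (auto simp: sum_nonneg)
  finally show ?thesis by simp
qed

lemma unit_lincombs_nonempty: "unit_lincombs \<noteq> {}"
  using zero_in_unit_lincombs by blast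

lemma unit_lincombs_bounded: "sn_bounded Qx unit_lincombs"
  unfolding sn_bounded_def
proof
  fix q assume "q \<in> Qx"
  then obtain B where B: "q = (\<lambda>\<Phi>. Sup ((\<lambda>v. cmod (\<Phi> v)) ` B))" "B \<noteq> {}" "B \<subseteq> D" "sn_bounded P B"
    unfolding strong_seminorms_def by blast
  obtain K where K: "\<forall>v\<in>B. \<forall>w\<in>B. cmod (S v w) \<le> K" using S_bounded_on_bounded[OF B(3,4)] by blast
  show "bdd_above (q ` unit_lincombs)"
  proof (rule bdd_aboveI2)
    fix \<Phi> assume \<Phi>: "\<Phi> \<in> unit_lincombs"
    show "q \<Phi> \<le> sqrt K"
      unfolding B(1)
    proof (rule cSUP_least[OF B(2)])
      fix v assume v: "v \<in> B"
      have "Re (S v v) \<le> K" using K v complex_Re_le_cmod[of "S v v"] by fastforce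
      then have "sqrt (Re (S v v)) \<le> sqrt K" by simp
      moreover have "cmod (\<Phi> v) \<le> sqrt (Re (S v v))" using cmod_unit_lincomb_le[OF \<Phi>] v B(3) by blast
      ultimately show "cmod (\<Phi> v) \<le> sqrt K" by linarith
    qed
  qed
qed

lemma partial_l2_attained:
  assumes y: "y \<in> D"
  shows "\<exists>\<Phi>\<in>unit_lincombs. cmod (\<Phi> y) = sqrt (\<Sum>n<N. (cmod (S (\<xi> n) y))\<^sup>2)"
proof (cases "sqrt (\<Sum>n<N. (cmod (S (\<xi> n) y))\<^sup>2) = 0")
  case True
  then show ?thesis by (intro bexI[OF _ zero_in_unit_lincombs]) simp
next
  case False
  define s where "s = sqrt (\<Sum>n<N. (cmod (S (\<xi> n) y))\<^sup>2)"
  have "s \<ge> 0" unfolding s_def by (simp add: sum_nonneg)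
  then have s: "s > 0" "s\<^sup>2 = (\<Sum>n<N. (cmod (S (\<xi> n) y))\<^sup>2)"
    using False unfolding s_def by (linarith, simp add: sum_nonneg)
  \<comment> \<open>the normalized coefficient vector \<open>a\<^sub>n = \<langle>S \<xi>\<^sub>n, y\<rangle>\<^sup>* / s\<close> has unit \<open>\<ell>\<^sup>2\<close>-norm\<close>
  define a where "a n = cnj (S (\<xi> n) y) / complex_of_real s" for n
  have "(\<Sum>n<N. (cmod (a n))\<^sup>2) = (\<Sum>n<N. (cmod (S (\<xi> n) y))\<^sup>2) / s\<^sup>2"
    unfolding a_def by (simp add: norm_divide power_divide sum_divide_distrib)
  also have "\<dots> = 1" unfolding s(2)[symmetric] using s(1) by simp
  finally have \<Phi>: "(\<lambda>f. \<Sum>n<N. a n * S (\<xi> n) f) \<in> unit_lincombs"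
    unfolding unit_lincombs_def by (intro CollectI exI[of _ a] exI[of _ N]) simp
  have "a n * S (\<xi> n) y = complex_of_real ((cmod (S (\<xi> n) y))\<^sup>2) / complex_of_real s" for n
    unfolding a_def using complex_norm_square[of "S (\<xi> n) y"] by (simp add: mult.commute)
  then have "(\<Sum>n<N. a n * S (\<xi> n) y) = complex_of_real (s\<^sup>2) / complex_of_real s"
    unfolding s(2) of_real_sum sum_divide_distrib by simp
  also have "\<dots> = complex_of_real s" using s(1) by (simp add: power2_eq_square)
  finally show ?thesis
    unfolding s_def[symmetric] using s(1) by (intro bexI[OF _ \<Phi>]) simp
qed

definition S_coeff_norm :: "'h \<Rightarrow> real" where
  "S_coeff_norm f = sqrt (\<Sum>n. (cmod (S (\<xi> n) f))\<^sup>2)"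

lemma S_coeff_norm_le_one_near_zero:
  "\<exists>F e. finite F \<and> F \<subseteq> P \<and> e > 0 \<and> (\<forall>y\<in>sn_ball D F 0 e. S_coeff_norm y \<le> 1)"
proof -
  obtain F e where F: "finite F" "F \<subseteq> P" "e > 0"
    and small: "\<forall>y\<in>sn_ball D F 0 e. \<forall>\<Phi>\<in>unit_lincombs. cmod (\<Phi> y) < 1"
    using reflexive_strongly_bounded_equicontinuous[OF reflexive unit_lincombs_nonempty
        unit_lincombs_subset unit_lincombs_bounded] by blast
  have "S_coeff_norm y \<le> 1" if y: "y \<in> sn_ball D F 0 e" for y
  proof -
    have yD: "y \<in> D" using y sn_ball_subset by blast
    have lt: "sqrt (\<Sum>n<N. (cmod (S (\<xi> n) y))\<^sup>2) < 1" for N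
    proof -
      obtain \<Phi> where "\<Phi> \<in> unit_lincombs" "cmod (\<Phi> y) = sqrt (\<Sum>n<N. (cmod (S (\<xi> n) y))\<^sup>2)"
        using partial_l2_attained[OF yD, of N] by blast
      then show ?thesis using small y by (metis (no_types, lifting))
    qed
    have "(\<Sum>n<N. (cmod (S (\<xi> n) y))\<^sup>2) \<le> 1" for N
      using lt[of N] by simp
    then have "(\<Sum>n. (cmod (S (\<xi> n) y))\<^sup>2) \<le> 1"
      by (rule suminf_le_const[OF S_coeff_summable[OF yD]])
    then show ?thesis unfolding S_coeff_norm_def by simp
  qed
  then show ?thesis using F by blast
qed

lemma S_coeff_norm_sc: "y \<in> D \<Longrightarrow> S_coeff_norm (sc c y) = cmod c * S_coeff_norm y"
proof -
  assume y: "y \<in> D"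
  have "(\<lambda>n. (cmod (S (\<xi> n) (sc c y)))\<^sup>2) = (\<lambda>n. (cmod c)\<^sup>2 * (cmod (S (\<xi> n) y))\<^sup>2)"
    using y by (simp add: S_in_conj_dual conj_dual_sc norm_mult power_mult_distrib)
  then show ?thesis
    unfolding S_coeff_norm_def using suminf_mult[OF S_coeff_summable[OF y]] by (simp add: real_sqrt_mult)
qed

lemma S_coeff_norm_reverse_triangle:
  assumes x: "x \<in> D" and y: "y \<in> D"
  shows "\<bar>S_coeff_norm x - S_coeff_norm y\<bar> \<le> S_coeff_norm (x - y)"
  unfolding S_coeff_norm_def
  using l2_reverse_triangle[OF S_coeff_summable[OF x] S_coeff_summable[OF y]] x y
  by (simp add: S_in_conj_dual conj_dual_diff)

lemma S_coeff_norm_continuous: "continuous_map tD euclidean S_coeff_norm"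
proof -
  obtain F e where F: "finite F" "F \<subseteq> P" "e > 0" "\<forall>y\<in>sn_ball D F 0 e. S_coeff_norm y \<le> 1"
    using S_coeff_norm_le_one_near_zero by blast
  show ?thesis
  proof (rule dominated_imp_continuous[where q=S_coeff_norm, OF S_coeff_norm_reverse_triangle F(1,2)])
    fix v assume "v \<in> D"
    then show "S_coeff_norm v \<le> (2 / e) * (\<Sum>p\<in>F. p v)"
      using homogeneous_le_sum_seminorms[OF S_coeff_norm_sc F(1-3)] F(4) by blast
  next
    show "0 \<le> 2 / e" using F(3) by simp
  qed
qed

lemma S_l2_coefficients: "l2_coefficients (\<lambda>n. S (\<xi> n))"
  using S_biorthogonal S_coeff_summable S_coeff_norm_continuous
  unfolding l2_coefficients_def biorthogonal_def S_coeff_norm_def by blast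

end


context rigged_basis
begin

lemma l2_coefficients_riesz_like: "l2_coefficients \<zeta> \<Longrightarrow> riesz_like_basis sc ip D P \<xi>"
  by (intro l2_biorthogonal_system.riesz_like l2_biorthogonal_system.intro
      l2_biorthogonal_system_axioms.intro rigged_basis_axioms)

lemma riesz_like_iff_unique_l2_coefficients:
  "riesz_like_basis sc ip D P \<xi> \<longleftrightarrow> (\<exists>!\<zeta>. l2_coefficients \<zeta>)"
proof
  assume "riesz_like_basis sc ip D P \<xi>"
  then obtain T where "in_C_DH sc ip D P T" "orthonormal_basis sc ip (\<lambda>n. T (\<xi> n))"
    unfolding riesz_like_basis_def by blast
  then have "l2_coefficients (\<lambda>n f. if f \<in> D then ip (T (\<xi> n)) (T f) else 0)"
    by (rule riesz_like_l2_coefficients)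
  then show "\<exists>!\<zeta>. l2_coefficients \<zeta>" using l2_coefficients_unique by blast
qed (use l2_coefficients_riesz_like in blast)

lemma riesz_like_iff_biorthogonalizing_operator:
  assumes reflexive: "sn_reflexive sc D P"
  shows "riesz_like_basis sc ip D P \<xi> \<longleftrightarrow> (\<exists>S. biorthogonalizing_operator S)"
proof
  assume "riesz_like_basis sc ip D P \<xi>"
  then obtain T where "in_C_DH sc ip D P T" "orthonormal_basis sc ip (\<lambda>n. T (\<xi> n))"
    unfolding riesz_like_basis_def by blast
  then show "\<exists>S. biorthogonalizing_operator S"
    using riesz_like_biorthogonalizing_operator by blast
next
  assume "\<exists>S. biorthogonalizing_operator S"
  then obtain S where "biorthogonalizing_operator S" by blast
  then have "l2_coefficients (\<lambda>n. S (\<xi> n))"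
    by (intro positive_biorthogonal_system.S_l2_coefficients[of sc ip D P \<xi> S]
        positive_biorthogonal_system.intro positive_biorthogonal_system_axioms.intro
        rigged_basis_axioms reflexive)
  then show "riesz_like_basis sc ip D P \<xi>" by (rule l2_coefficients_riesz_like)
qed

end

theorem theorem3p3:
  fixes sc :: "complex \<Rightarrow> 'h::ab_group_add \<Rightarrow> 'h"
    and ip :: "'h \<Rightarrow> 'h \<Rightarrow> complex"
    and D :: "'h set" and P :: "('h \<Rightarrow> real) set"
    and \<xi> :: "nat \<Rightarrow> 'h"
  assumes rhs: "rigged_hilbert sc ip D P"
    and complete: "sn_complete_set P D"
    and reflexive: "sn_reflexive sc D P"
    and qcomplete: "sn_quasi_complete (conj_dual sc D P) (strong_seminorms D P)"
    and basis: "topological_basis_sn sc D P \<xi>"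
  shows "(riesz_like_basis sc ip D P \<xi>
            \<longleftrightarrow> (\<exists>!\<zeta>. (\<forall>n. \<zeta> n \<in> conj_dual sc D P)
                   \<and> (\<forall>n k. \<zeta> n (\<xi> k) = (if n = k then 1 else 0))
                   \<and> (\<forall>f\<in>D. summable (\<lambda>n. (cmod (\<zeta> n f))\<^sup>2))
                   \<and> continuous_map (sn_topology D P) euclidean
                       (\<lambda>f. sqrt (\<Sum>n. (cmod (\<zeta> n f))\<^sup>2))))
       \<and> (riesz_like_basis sc ip D P \<xi>
            \<longleftrightarrow> (\<exists>S. in_L_DDx sc D P S
                   \<and> (\<forall>f\<in>D. Im (S f f) = 0 \<and> Re (S f f) \<ge> 0)
                   \<and> (\<forall>n k. S (\<xi> n) (\<xi> k) = (if n = k then 1 else 0))))"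
proof -
  have "complex_hilbert sc ip" using rhs unfolding rigged_hilbert_def by blast
  then interpret rigged_basis sc ip D P \<xi>
    by (intro rigged_basis.intro rigged_hilbert_space.intro complex_hilbert_space.intro
        rigged_hilbert_space_axioms.intro rigged_basis_axioms.intro rhs basis)
  show ?thesis
    using riesz_like_iff_unique_l2_coefficients riesz_like_iff_biorthogonalizing_operator[OF reflexive]
    unfolding l2_coefficients_def biorthogonalizing_operator_def by blast
qed

end
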